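(* Let $U\subset\mathbb{R}^s$ be open, $X:U\to\mathbb{R}^{n+1}_1$ a spacelike embedding, $M=X(U)$, $n^T$ a smooth future directed unit timelike normal field, and $H:U\times\mathbb{S}^{n-1}_+\to\mathbb{R}$, $H(u,v)=\langle X(u),v\rangle$, with $h_v=H(\cdot,v)$. Let $u_0\in U$, $p_0=X(u_0)$, $v_0\in\mathbb{S}^{n-1}_+$. Then: (1) $\frac{\partial H}{\partial u_i}(u_0,v_0)=0$ for all $i=1,\dots,s$ if and only if there exists $\xi_0\in N_1(M)_{p_0}[n^T]$ with $v_0=\widetilde{\mathbb{LG}}(n^T)(p_0,\xi_0)$. Suppose now $v_0=\widetilde{\mathbb{LG}}(n^T)(p_0,\xi_0)$ with $\xi_0\in N_1(M)_{p_0}[n^T]$, and let $n^S$ be a local smooth section of $N_1(M)[n^T]$ with $n^S(u_0)=\xi_0$. Then (2) $p_0$ is a $(n^T(u_0),\xi_0)$-parabolic point (i.e. $K_\ell(n^T,n^S)(u_0)=0$) if and only if $\det\mathrm{Hess}(h_{v_0})(u_0)=0$; (3) $p_0$ is a flat $(n^T(u_0),\xi_0)$-umbilical point (i.e. $S_{p_0}(n^T,n^S)=0$) if and only if $\mathrm{rank}\,\mathrm{Hess}(h_{v_0})(u_0)=0$; (4) $u_0$ is a non-degenerate critical point of $h_{v_0}$ if and only if $(p_0,\xi_0)$ is a regular point of $\widetilde{\mathbb{LG}}(n^T)$.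
   Context: $\mathbb{R}^{n+1}_1$ is $\mathbb{R}^{n+1}$ with $\langle x,y\rangle=-x_0y_0+\sum_{i=1}^n x_iy_i$; spacelike embedding means tangent spaces consist of vectors with $\langle v,v\rangle>0$. $\mathbb{S}^{n-1}_+=\{x:\langle x,x\rangle=0,x_0=1\}$; for nonzero lightlike $x$, $\widetilde x=x/x_0$. $N_p(M)$ is the pseudo-orthogonal complement of $T_pM$; $n^T(u)\in N_{X(u)}(M)$, $\langle n^T,n^T\rangle=-1$, $n^T_0>0$. $N_1(M)_p[n^T]=\{\xi\in N_p(M):\langle\xi,\xi\rangle=1,\langle\xi,n^T(p)\rangle=0\}$, $N_1(M)[n^T]=\bigcup_pN_1(M)_p[n^T]$, and $\widetilde{\mathbb{LG}}(n^T):N_1(M)[n^T]\to\mathbb{S}^{n-1}_+$, $(p,\xi)\mapsto\widetilde{n^T(p)+\xi}$ (a map between $(n-1)$-manifolds). With $\pi^\tau:T_pM\oplus N_p(M)\to T_pM$ the projection, $S_p(n^T,n^S)=-\pi^\tau\circ d_p(n^T+n^S)$ and $K_\ell(n^T,n^S)=\det S_p(n^T,n^S)$; these depend at $u_0$ only on $n^T(u_0)$ and $n^S(u_0)$. *)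

theory Defs
  imports "HOL-Analysis.Analysis"
begin

text \<open>Minkowski space R^{n+1}_1 is modelled as real \<times> real^'n : the first component is x_0,
  the second is (x_1,...,x_n). Hence n = CARD('n).\<close>

type_synonym 'n mink = "real \<times> (real^('n::finite))"

definition lor :: "('n::finite) mink \<Rightarrow> 'n mink \<Rightarrow> real" where
  "lor x y = - fst x * fst y + snd x \<bullet> snd y"

definition lightcone_sphere :: "('n::finite) mink set" where
  "lightcone_sphere = {x. lor x x = 0 \<and> fst x = 1}"

definition ltilde :: "('n::finite) mink \<Rightarrow> 'n mink" where
  "ltilde x = (1 / fst x) *\<^sub>R x"

text \<open>C^k on a set (used on open sets): continuity, and for k+1 differentiability plus all
  directional derivative functions being C^k.\<close>
fun Ck_on :: "nat \<Rightarrow> 'a::real_normed_vector set \<Rightarrow> ('a \<Rightarrow> 'b::real_normed_vector) \<Rightarrow> bool" where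
  "Ck_on 0 S f = continuous_on S f"
| "Ck_on (Suc k) S f = (f differentiable_on S \<and>
      (\<forall>w. Ck_on k S (\<lambda>x. frechet_derivative f (at x) w)))"

definition smooth_on :: "'a::real_normed_vector set \<Rightarrow> ('a \<Rightarrow> 'b::real_normed_vector) \<Rightarrow> bool" where
  "smooth_on S f \<longleftrightarrow> (\<forall>k. Ck_on k S f)"

definition pderiv :: "(real^('s::finite) \<Rightarrow> real) \<Rightarrow> real^'s \<Rightarrow> 's \<Rightarrow> real" where
  "pderiv f u i = frechet_derivative f (at u) (axis i 1)"

definition hessian :: "(real^('s::finite) \<Rightarrow> real) \<Rightarrow> real^'s \<Rightarrow> real^'s^'s" where
  "hessian f u = (\<chi> i j. pderiv (\<lambda>x. pderiv f x j) u i)"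

definition nondegenerate_critical_point :: "(real^('s::finite) \<Rightarrow> real) \<Rightarrow> real^'s \<Rightarrow> bool" where
  "nondegenerate_critical_point f u \<longleftrightarrow>
     (\<forall>i. pderiv f u i = 0) \<and> det (hessian f u) \<noteq> 0"

definition tan_space :: "(real^('s::finite) \<Rightarrow> ('n::finite) mink) \<Rightarrow> real^'s \<Rightarrow> 'n mink set" where
  "tan_space X u = range (frechet_derivative X (at u))"

definition nor_space :: "(real^('s::finite) \<Rightarrow> ('n::finite) mink) \<Rightarrow> real^'s \<Rightarrow> 'n mink set" where
  "nor_space X u = {\<nu>. \<forall>t\<in>tan_space X u. lor \<nu> t = 0}"

definition spacelike_embedding :: "(real^('s::finite)) set \<Rightarrow> (real^'s \<Rightarrow> ('n::finite) mink) \<Rightarrow> bool" where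
  "spacelike_embedding U X \<longleftrightarrow>
     smooth_on U X \<and>
     homeomorphism U (X ` U) X (inv_into U X) \<and>
     (\<forall>u\<in>U. inj (frechet_derivative X (at u))) \<and>
     (\<forall>u\<in>U. \<forall>t\<in>tan_space X u. t \<noteq> 0 \<longrightarrow> lor t t > 0)"

definition future_unit_timelike_normal :: "(real^('s::finite)) set \<Rightarrow> (real^'s \<Rightarrow> ('n::finite) mink) \<Rightarrow> (real^'s \<Rightarrow> 'n mink) \<Rightarrow> bool" where
  "future_unit_timelike_normal U X nT \<longleftrightarrow>
     smooth_on U nT \<and>
     (\<forall>u\<in>U. nT u \<in> nor_space X u \<and> lor (nT u) (nT u) = -1 \<and> fst (nT u) > 0)"

definition N1 :: "(real^('s::finite) \<Rightarrow> ('n::finite) mink) \<Rightarrow> (real^'s \<Rightarrow> 'n mink) \<Rightarrow> real^'s \<Rightarrow> 'n mink set" where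
  "N1 X nT u = {\<xi> \<in> nor_space X u. lor \<xi> \<xi> = 1 \<and> lor \<xi> (nT u) = 0}"

definition N1_bundle :: "(real^('s::finite)) set \<Rightarrow> (real^'s \<Rightarrow> ('n::finite) mink) \<Rightarrow> (real^'s \<Rightarrow> 'n mink) \<Rightarrow> ('n mink \<times> 'n mink) set" where
  "N1_bundle U X nT = {(X u, \<xi>) | u \<xi>. u \<in> U \<and> \<xi> \<in> N1 X nT u}"

definition LGt :: "(real^('s::finite)) set \<Rightarrow> (real^'s \<Rightarrow> ('n::finite) mink) \<Rightarrow> (real^'s \<Rightarrow> 'n mink) \<Rightarrow> 'n mink \<times> 'n mink \<Rightarrow> 'n mink" where
  "LGt U X nT pxi = ltilde (nT (inv_into U X (fst pxi)) + snd pxi)"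

definition local_section :: "(real^('s::finite)) set \<Rightarrow> (real^'s \<Rightarrow> ('n::finite) mink) \<Rightarrow> (real^'s \<Rightarrow> 'n mink) \<Rightarrow> (real^'s) set \<Rightarrow> (real^'s \<Rightarrow> 'n mink) \<Rightarrow> bool" where
  "local_section U X nT V nS \<longleftrightarrow>
     open V \<and> V \<subseteq> U \<and> smooth_on V nS \<and> (\<forall>u\<in>V. nS u \<in> N1 X nT u)"

definition proj_tan :: "(real^('s::finite) \<Rightarrow> ('n::finite) mink) \<Rightarrow> real^'s \<Rightarrow> 'n mink \<Rightarrow> 'n mink" where
  "proj_tan X u w = (THE t. t \<in> tan_space X u \<and> w - t \<in> nor_space X u)"

text \<open>S_p(n^T,n^S) = - pi^tau o d_p(n^T + n^S), acting on w in T_pM, p = X(u).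
  Here nu = n^T + n^S as a function of the parameter u; d_p nu (dX_u a) = d nu_u a.\<close>
definition shape_op :: "(real^('s::finite) \<Rightarrow> ('n::finite) mink) \<Rightarrow> (real^'s \<Rightarrow> 'n mink) \<Rightarrow> real^'s \<Rightarrow> 'n mink \<Rightarrow> 'n mink" where
  "shape_op X \<nu> u w =
     - proj_tan X u (frechet_derivative \<nu> (at u) (THE a. frechet_derivative X (at u) a = w))"

definition shape_matrix :: "(real^('s::finite) \<Rightarrow> ('n::finite) mink) \<Rightarrow> (real^'s \<Rightarrow> 'n mink) \<Rightarrow> real^'s \<Rightarrow> real^'s^'s" where
  "shape_matrix X \<nu> u = (THE A. \<forall>j. shape_op X \<nu> u (frechet_derivative X (at u) (axis j 1)) =
       (\<Sum>i\<in>UNIV. A$i$j *\<^sub>R frechet_derivative X (at u) (axis i 1)))"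

definition K_ell :: "(real^('s::finite) \<Rightarrow> ('n::finite) mink) \<Rightarrow> (real^'s \<Rightarrow> 'n mink) \<Rightarrow> (real^'s \<Rightarrow> 'n mink) \<Rightarrow> real^'s \<Rightarrow> real" where
  "K_ell X nT nS u = det (shape_matrix X (\<lambda>x. nT x + nS x) u)"

definition flat_umbilical :: "(real^('s::finite) \<Rightarrow> ('n::finite) mink) \<Rightarrow> (real^'s \<Rightarrow> 'n mink) \<Rightarrow> (real^'s \<Rightarrow> 'n mink) \<Rightarrow> real^'s \<Rightarrow> bool" where
  "flat_umbilical X nT nS u \<longleftrightarrow> (\<forall>w\<in>tan_space X u. shape_op X (\<lambda>x. nT x + nS x) u w = 0)"

definition curve_through :: "'a::real_normed_vector set \<Rightarrow> 'a \<Rightarrow> (real \<Rightarrow> 'a) \<Rightarrow> bool" where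
  "curve_through A a \<gamma> \<longleftrightarrow>
     (\<exists>e>0. smooth_on {-e<..<e} \<gamma> \<and> \<gamma> ` {-e<..<e} \<subseteq> A) \<and> \<gamma> 0 = a"

definition tangent_set :: "'a::real_normed_vector set \<Rightarrow> 'a \<Rightarrow> 'a set" where
  "tangent_set A a = {vector_derivative \<gamma> (at 0) | \<gamma>. curve_through A a \<gamma>}"

definition differential_image :: "'a::real_normed_vector set \<Rightarrow> ('a \<Rightarrow> 'b::real_normed_vector) \<Rightarrow> 'a \<Rightarrow> 'b set" where
  "differential_image A F a = {vector_derivative (F \<circ> \<gamma>) (at 0) | \<gamma>. curve_through A a \<gamma>}"

definition regular_point :: "'a::real_normed_vector set \<Rightarrow> 'b::real_normed_vector set \<Rightarrow> ('a \<Rightarrow> 'b) \<Rightarrow> 'a \<Rightarrow> bool" where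
  "regular_point A B F a \<longleftrightarrow> differential_image A F a = tangent_set B (F a)"

end

theory Submission
  imports Defs
begin

(* The height function h_v(u) = <X(u), v> has partial derivatives <X_{u_i}, v>, so u0 is critical
   exactly when v0 is normal to M, and a lightlike normal v0 with first coordinate 1 is the
   normalisation of n^T + xi for a unique xi in N_1(M)[n^T].
   For nu = n^T + n^S, differentiating <X_{u_j}, nu> = 0 (Weingarten) identifies the Hessian of
   h_v0 with (G A)^T / c, where G is the Gram matrix of the coordinate vectors (invertible since M
   is spacelike), A the matrix of S_p(n^T, n^S) and c the first coordinate of nu(u0); this gives
   (2) and (3).
   For (4), the velocity of the lightcone Gauss map along a curve in N_1(M)[n^T] is the
   differential of x |-> x/x_0 at nu(u0) applied to d nu(a) + f with f normal, and d nu(a) is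
   -dX(A a) up to a normal vector. So the differential can reach every tangent vector of the
   sphere only if A is invertible; conversely, when A is invertible each tangent vector is the
   velocity of an explicit curve over a straight line in parameter space. *)

section \<open>Smooth maps\<close>

lemma Ck_on_transform:
  assumes "open S" "\<And>x. x \<in> S \<Longrightarrow> f x = g x" "Ck_on k S f"
  shows "Ck_on k S g"
  using assms(2,3)
proof (induction k arbitrary: f g)
  case 0
  then show ?case using continuous_on_cong by auto
next
  case (Suc k)
  have fd: "f differentiable_on S" and fC: "\<And>w. Ck_on k S (\<lambda>x. frechet_derivative f (at x) w)"
    using Suc.prems by auto
  have gd: "(g has_derivative frechet_derivative f (at x)) (at x)" if "x \<in> S" for x
  proof -
    have "(f has_derivative frechet_derivative f (at x)) (at x)"
      using fd that assms(1) differentiable_on_eq_differentiable_at frechet_derivative_works by blast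
    thus ?thesis using has_derivative_transform_within_open[OF _ assms(1) that] Suc.prems(1) by blast
  qed
  have "g differentiable_on S"
    using gd assms(1) differentiable_on_eq_differentiable_at unfolding differentiable_def by blast
  moreover have "Ck_on k S (\<lambda>x. frechet_derivative g (at x) w)" for w
    by (rule Suc.IH[OF _ fC[of w]]) (simp add: frechet_derivative_at[OF gd])
  ultimately show ?case by simp
qed

lemma Ck_on_SucI:
  assumes "open S" "\<And>x. x \<in> S \<Longrightarrow> (f has_derivative f' x) (at x)" "\<And>w. Ck_on k S (\<lambda>x. f' x w)"
  shows "Ck_on (Suc k) S f"
proof -
  have "f differentiable_on S"
    using assms(1,2) differentiable_on_eq_differentiable_at unfolding differentiable_def by blast
  moreover have "Ck_on k S (\<lambda>x. frechet_derivative f (at x) w)" for w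
    by (rule Ck_on_transform[OF assms(1) _ assms(3)]) (simp add: frechet_derivative_at[OF assms(2)])
  ultimately show ?thesis by simp
qed

lemma Ck_on_Suc_has_derivative:
  assumes "open S" "Ck_on (Suc k) S f" "x \<in> S"
  shows "(f has_derivative frechet_derivative f (at x)) (at x)"
proof -
  have "f differentiable_on S" using assms(2) by simp
  thus ?thesis using assms(1,3) differentiable_on_eq_differentiable_at frechet_derivative_works by blast
qed

lemma smooth_on_has_derivative:
  "open S \<Longrightarrow> smooth_on S f \<Longrightarrow> x \<in> S \<Longrightarrow> (f has_derivative frechet_derivative f (at x)) (at x)"
  using Ck_on_Suc_has_derivative[of S 0 f x] unfolding smooth_on_def by blast

lemma Ck_on_Suc_imp_Ck_on: "Ck_on (Suc k) S f \<Longrightarrow> Ck_on k S f"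
  by (induction k arbitrary: f) (auto simp: differentiable_imp_continuous_on)

lemma Ck_on_const: "Ck_on k S (\<lambda>x. c)"
proof (induction k arbitrary: c)
  case (Suc k)
  have "frechet_derivative (\<lambda>x. c) (at x) = (\<lambda>h. 0)" for x
    by (rule frechet_derivative_at[OF has_derivative_const, symmetric])
  then show ?case using Suc by simp
qed simp

lemma Ck_on_id: "Ck_on k S (\<lambda>x. x)"
proof (induction k)
  case (Suc k)
  have "frechet_derivative (\<lambda>x. x) (at x) = (\<lambda>h. h)" for x
    by (rule frechet_derivative_at[OF has_derivative_ident, symmetric])
  then show ?case by (simp add: differentiable_on_id Ck_on_const)
qed (simp add: continuous_on_id)

lemma Ck_on_add:
  assumes "open S" "Ck_on k S f" "Ck_on k S g"
  shows "Ck_on k S (\<lambda>x. f x + g x)"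
  using assms(2,3)
proof (induction k arbitrary: f g)
  case (Suc k)
  show ?case
  proof (rule Ck_on_SucI[OF assms(1)])
    show "((\<lambda>x. f x + g x) has_derivative
        (\<lambda>h. frechet_derivative f (at x) h + frechet_derivative g (at x) h)) (at x)" if "x \<in> S" for x
      using Ck_on_Suc_has_derivative[OF assms(1) Suc.prems(1) that]
        Ck_on_Suc_has_derivative[OF assms(1) Suc.prems(2) that] by (rule has_derivative_add)
  qed (use Suc in auto)
qed (simp add: continuous_on_add)

lemma Ck_on_linear:
  assumes "open S" "bounded_linear L" "Ck_on k S f"
  shows "Ck_on k S (\<lambda>x. L (f x))"
  using assms(3)
proof (induction k arbitrary: f)
  case (Suc k)
  show ?case
  proof (rule Ck_on_SucI[OF assms(1)])
    show "((\<lambda>x. L (f x)) has_derivative (\<lambda>h. L (frechet_derivative f (at x) h))) (at x)"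
      if "x \<in> S" for x
      using Ck_on_Suc_has_derivative[OF assms(1) Suc.prems that]
        bounded_linear.has_derivative[OF assms(2)] by blast
  qed (use Suc in auto)
qed (use bounded_linear.continuous_on[OF assms(2)] in simp)

lemma Ck_on_bilinear:
  fixes f :: "'a::real_normed_vector \<Rightarrow> 'b::real_normed_vector" and g :: "'a \<Rightarrow> 'c::real_normed_vector"
    and prod :: "'b \<Rightarrow> 'c \<Rightarrow> 'd::real_normed_vector"
  assumes "open S" "bounded_bilinear prod" "Ck_on k S f" "Ck_on k S g"
  shows "Ck_on k S (\<lambda>x. prod (f x) (g x))"
  using assms(3,4)
proof (induction k arbitrary: f g)
  case (Suc k)
  show ?case
  proof (rule Ck_on_SucI[OF assms(1)])
    show "((\<lambda>x. prod (f x) (g x)) has_derivative (\<lambda>h. prod (f x) (frechet_derivative g (at x) h)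
        + prod (frechet_derivative f (at x) h) (g x))) (at x)" if "x \<in> S" for x
      using Ck_on_Suc_has_derivative[OF assms(1) Suc.prems(1) that]
        Ck_on_Suc_has_derivative[OF assms(1) Suc.prems(2) that]
      by (rule bounded_bilinear.FDERIV[OF assms(2)])
    show "Ck_on k S (\<lambda>x. prod (f x) (frechet_derivative g (at x) h)
        + prod (frechet_derivative f (at x) h) (g x))" for h
    proof (rule Ck_on_add[OF assms(1)])
      show "Ck_on k S (\<lambda>x. prod (f x) (frechet_derivative g (at x) h))"
        using Suc.IH[OF Ck_on_Suc_imp_Ck_on[OF Suc.prems(1)]] Suc.prems(2) by simp
      show "Ck_on k S (\<lambda>x. prod (frechet_derivative f (at x) h) (g x))"
        using Suc.IH[OF _ Ck_on_Suc_imp_Ck_on[OF Suc.prems(2)]] Suc.prems(1) by simp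
    qed
  qed
qed (use bounded_bilinear.continuous_on[OF assms(2)] in simp)

lemma Ck_on_mult:
  fixes f g :: "'a::real_normed_vector \<Rightarrow> 'b::real_normed_algebra"
  shows "open S \<Longrightarrow> Ck_on k S f \<Longrightarrow> Ck_on k S g \<Longrightarrow> Ck_on k S (\<lambda>x. f x * g x)"
  using Ck_on_bilinear[OF _ bounded_bilinear_mult] by blast

lemma Ck_on_scaleR:
  "open S \<Longrightarrow> Ck_on k S f \<Longrightarrow> Ck_on k S g \<Longrightarrow> Ck_on k S (\<lambda>x. f x *\<^sub>R g x)"
  using Ck_on_bilinear[OF _ bounded_bilinear_scaleR] by blast

lemma Ck_on_diff:
  assumes "open S" "Ck_on k S f" "Ck_on k S g"
  shows "Ck_on k S (\<lambda>x. f x - g x)"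
proof -
  have "Ck_on k S (\<lambda>x. - g x)"
    using Ck_on_linear[OF assms(1) bounded_linear_minus[OF bounded_linear_ident] assms(3)] .
  from Ck_on_add[OF assms(1,2) this] show ?thesis by simp
qed

lemma Ck_on_Pair:
  assumes "open S" "Ck_on k S f" "Ck_on k S g"
  shows "Ck_on k S (\<lambda>x. (f x, g x))"
proof -
  have "Ck_on k S (\<lambda>x. (f x, 0) + (0, g x))"
    using Ck_on_linear[OF assms(1) bounded_linear_Pair[OF bounded_linear_ident bounded_linear_zero] assms(2)]
      Ck_on_linear[OF assms(1) bounded_linear_Pair[OF bounded_linear_zero bounded_linear_ident] assms(3)]
    by (rule Ck_on_add[OF assms(1)])
  thus ?thesis by simp
qed

lemma Ck_on_sum:
  assumes "open S" "\<And>i. i \<in> I \<Longrightarrow> Ck_on k S (f i)"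
  shows "Ck_on k S (\<lambda>x. \<Sum>i\<in>I. f i x)"
  using assms(2)
  by (induction I rule: infinite_finite_induct) (auto intro: Ck_on_add[OF assms(1)] Ck_on_const)

lemma Ck_on_prod:
  fixes f :: "'i \<Rightarrow> 'a::real_normed_vector \<Rightarrow> 'b::{real_normed_algebra,comm_ring_1}"
  assumes "open S" "\<And>i. i \<in> I \<Longrightarrow> Ck_on k S (f i)"
  shows "Ck_on k S (\<lambda>x. \<Prod>i\<in>I. f i x)"
  using assms(2)
  by (induction I rule: infinite_finite_induct) (auto intro: Ck_on_mult[OF assms(1)] Ck_on_const)

lemma Ck_on_powr:
  fixes f :: "'a::real_normed_vector \<Rightarrow> real"
  assumes "open S" "Ck_on k S f" "\<And>x. x \<in> S \<Longrightarrow> f x > 0"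
  shows "Ck_on k S (\<lambda>x. f x powr r)"
  using assms(2)
proof (induction k arbitrary: r)
  case 0
  have "f x \<ge> 0 \<and> (f x = 0 \<longrightarrow> r > 0)" if "x \<in> S" for x
    using assms(3)[OF that] by simp
  then show ?case using 0 by (auto intro!: continuous_on_powr' continuous_on_const)
next
  case (Suc k)
  show ?case
  proof (rule Ck_on_SucI[OF assms(1)])
    show "((\<lambda>x. f x powr r) has_derivative
        (\<lambda>h. r * f x powr (r - 1) * frechet_derivative f (at x) h)) (at x)" if "x \<in> S" for x
      using Ck_on_Suc_has_derivative[OF assms(1) Suc.prems that] assms(3)[OF that]
      by (auto intro!: derivative_eq_intros simp: powr_diff field_simps)
    show "Ck_on k S (\<lambda>x. r * f x powr (r - 1) * frechet_derivative f (at x) h)" for h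
      using Suc Ck_on_Suc_imp_Ck_on
      by (auto intro!: Ck_on_mult[OF assms(1)] Ck_on_const)
  qed
qed

lemma Ck_on_divide:
  fixes f g :: "'a::real_normed_vector \<Rightarrow> real"
  assumes "open S" "Ck_on k S f" "Ck_on k S g" "\<And>x. x \<in> S \<Longrightarrow> g x \<noteq> 0"
  shows "Ck_on k S (\<lambda>x. f x / g x)"
proof (rule Ck_on_transform[OF assms(1)])
  show "f x * g x * (g x * g x) powr -1 = f x / g x" if "x \<in> S" for x
    using assms(4)[OF that] by (simp add: powr_minus_divide)
  have "g x * g x > 0" if "x \<in> S" for x
    using assms(4)[OF that] not_real_square_gt_zero by blast
  then show "Ck_on k S (\<lambda>x. f x * g x * (g x * g x) powr -1)"
    by (intro Ck_on_mult[OF assms(1)] Ck_on_powr assms(1-3))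
qed

lemma Ck_on_det:
  fixes M :: "'a::real_normed_vector \<Rightarrow> real^'n^'n"
  assumes "open S" "\<And>i j. Ck_on k S (\<lambda>x. M x $ i $ j)"
  shows "Ck_on k S (\<lambda>x. det (M x))"
  unfolding det_def using assms
  by (intro Ck_on_sum Ck_on_mult Ck_on_const Ck_on_prod) auto

lemma Ck_on_compose_line:
  assumes "open S" "open U" "\<And>t. t \<in> S \<Longrightarrow> p + t *\<^sub>R d \<in> U" "Ck_on k U f"
  shows "Ck_on k S (\<lambda>t. f (p + t *\<^sub>R d))"
  using assms(4)
proof (induction k arbitrary: f)
  case 0
  then show ?case
    using assms(3) by (auto intro!: continuous_on_compose2[of U f] continuous_intros)
next
  case (Suc k)
  show ?case
  proof (rule Ck_on_SucI[OF assms(1)])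
    show "((\<lambda>t. f (p + t *\<^sub>R d)) has_derivative
        (\<lambda>h. h *\<^sub>R frechet_derivative f (at (p + t *\<^sub>R d)) d)) (at t)" if "t \<in> S" for t
    proof -
      have f': "(f has_derivative frechet_derivative f (at (p + t *\<^sub>R d))) (at (p + t *\<^sub>R d))"
        using Ck_on_Suc_has_derivative[OF assms(2) Suc.prems assms(3)[OF that]] .
      have "((\<lambda>t. p + t *\<^sub>R d) has_derivative (\<lambda>h. h *\<^sub>R d)) (at t)"
        by (auto intro!: derivative_eq_intros)
      from has_derivative_compose[OF this f']
      show ?thesis using linear_scale[OF has_derivative_linear[OF f']] by simp
    qed
    show "Ck_on k S (\<lambda>t. h *\<^sub>R frechet_derivative f (at (p + t *\<^sub>R d)) d)" for h
      using Suc.IH[of "\<lambda>x. frechet_derivative f (at x) d"] Suc.prems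
      by (auto intro: Ck_on_scaleR[OF assms(1) Ck_on_const])
  qed
qed

lemma smooth_on_has_vector_derivative:
  assumes "e > 0" "smooth_on {-e<..<e} \<gamma>"
  shows "(\<gamma> has_vector_derivative vector_derivative \<gamma> (at 0)) (at 0)"
proof -
  have "(\<gamma> has_derivative frechet_derivative \<gamma> (at 0)) (at 0)"
    using smooth_on_has_derivative[OF _ assms(2), of 0] assms(1) by simp
  thus ?thesis using vector_derivative_works unfolding differentiable_def by blast
qed

lemma has_derivative_zero_if_locally_constant:
  assumes "open S" "x \<in> S" "\<And>y. y \<in> S \<Longrightarrow> f y = k" "(f has_derivative f') (at x)"
  shows "f' = (\<lambda>h. 0)"
proof -
  have "(f has_derivative (\<lambda>h. 0)) (at x)"
    by (rule has_derivative_transform_within_open[OF has_derivative_const assms(1,2)])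
      (use assms(3) in auto)
  thus ?thesis using has_derivative_unique assms(4) by blast
qed

lemma open_contains_line_segment:
  fixes p d :: "'a::real_normed_vector"
  assumes "open V" "p \<in> V"
  obtains e where "e > 0" "\<And>t. t \<in> {-e<..<e} \<Longrightarrow> p + t *\<^sub>R d \<in> V"
proof -
  obtain r where r: "r > 0" "ball p r \<subseteq> V" using assms open_contains_ball by blast
  have nd: "norm d + 1 > 0" by (smt (verit) norm_ge_zero)
  define e where "e = r / (norm d + 1)"
  have "e > 0" unfolding e_def by (rule divide_pos_pos[OF r(1) nd])
  moreover have "p + t *\<^sub>R d \<in> V" if "t \<in> {-e<..<e}" for t
  proof -
    have "norm (t *\<^sub>R d) \<le> \<bar>t\<bar> * (norm d + 1)" by (simp add: mult_left_mono)
    also have "\<dots> < e * (norm d + 1)"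
      using that nd by (intro mult_strict_right_mono) auto
    also have "\<dots> = r" using nd by (simp add: e_def)
    finally show ?thesis using r(2) by (auto simp: dist_norm)
  qed
  ultimately show thesis using that by blast
qed

lemma has_derivative_along_line:
  assumes "(f has_derivative f') (at p)"
  shows "((\<lambda>t. f (p + t *\<^sub>R d)) has_derivative (\<lambda>h. h *\<^sub>R f' d)) (at 0)"
proof -
  have "((\<lambda>t. p + t *\<^sub>R d) has_derivative (\<lambda>h. h *\<^sub>R d)) (at 0)"
    by (auto intro!: derivative_eq_intros)
  moreover have "(f has_derivative f') (at (p + 0 *\<^sub>R d))" using assms by simp
  ultimately have "((\<lambda>t. f (p + t *\<^sub>R d)) has_derivative (\<lambda>h. f' (h *\<^sub>R d))) (at 0)"
    by (rule has_derivative_compose)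
  thus ?thesis using linear_scale[OF has_derivative_linear[OF assms]] by simp
qed

section \<open>Linear algebra\<close>

lemma linear_axis_expansion:
  fixes a :: "real^'n"
  assumes "linear f"
  shows "f a = (\<Sum>j\<in>UNIV. a$j *\<^sub>R f (axis j 1))"
proof -
  have "a = (\<Sum>j\<in>UNIV. a$j *\<^sub>R axis j 1)"
    using basis_expansion[of a] by (simp add: scalar_mult_eq_scaleR)
  hence "f a = f (\<Sum>j\<in>UNIV. a$j *\<^sub>R axis j 1)" by (rule arg_cong)
  thus ?thesis by (simp add: linear_sum[OF assms] linear_scale[OF assms])
qed

text \<open>Cramer's rule as an explicit formula, so that solutions depend smoothly on the data.\<close>

definition cramer_sol :: "real^'n^'n \<Rightarrow> real^'n \<Rightarrow> real^'n" where
  "cramer_sol A b = (\<chi> k. det (\<chi> i j. if j = k then b$i else A$i$j) / det A)"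

lemma cramer_sol: "det A \<noteq> 0 \<Longrightarrow> A *v cramer_sol A b = b"
  using cramer[of A "cramer_sol A b" b] unfolding cramer_sol_def by simp

lemma Ck_on_cramer_sol:
  fixes A :: "'a::real_normed_vector \<Rightarrow> real^'n^'n"
  assumes "open S" "\<And>i j. Ck_on k S (\<lambda>x. A x $ i $ j)" "\<And>i. Ck_on k S (\<lambda>x. b x $ i)"
    and "\<And>x. x \<in> S \<Longrightarrow> det (A x) \<noteq> 0"
  shows "Ck_on k S (\<lambda>x. cramer_sol (A x) (b x) $ m)"
proof -
  have "Ck_on k S (\<lambda>x. if j = m then b x $ i else A x $ i $ j)" for i j
    using assms(2,3) by (cases "j = m") auto
  thus ?thesis
    unfolding cramer_sol_def using assms by (auto intro!: Ck_on_divide Ck_on_det)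
qed

lemma det_eq_0_iff_kernel: "det (A::real^'n^'n) = 0 \<longleftrightarrow> (\<exists>x. x \<noteq> 0 \<and> A *v x = 0)"
  using det_eq_0_rank[of A] matrix_nonfull_linear_equations_eq[of A] rank_bound[of A] by auto

section \<open>Minkowski space and the lightcone sphere\<close>

lemma bounded_bilinear_lor: "bounded_bilinear (lor :: 'n::finite mink \<Rightarrow> 'n mink \<Rightarrow> real)"
proof -
  have "lor = (\<lambda>x::'n mink. inner (- fst x, snd x))"
    by (auto simp: fun_eq_iff lor_def inner_prod_def)
  moreover have "bounded_bilinear (\<lambda>x::'n mink. inner (- fst x, snd x))"
    by (intro bounded_bilinear.comp1[OF bounded_bilinear_inner] bounded_linear_Pair
        bounded_linear_minus bounded_linear_fst bounded_linear_snd)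
  ultimately show ?thesis by simp
qed

lemmas has_derivative_lor = bounded_bilinear.FDERIV[OF bounded_bilinear_lor]

lemma lor_sym: "lor x y = lor y x"
  by (simp add: lor_def inner_commute mult.commute)

lemma lor_add_left: "lor (x + y) z = lor x z + lor y z"
  and lor_add_right: "lor z (x + y) = lor z x + lor z y"
  and lor_diff_left: "lor (x - y) z = lor x z - lor y z"
  and lor_diff_right: "lor z (x - y) = lor z x - lor z y"
  and lor_scaleR_left: "lor (c *\<^sub>R x) z = c * lor x z"
  and lor_scaleR_right: "lor z (c *\<^sub>R x) = c * lor z x"
  and lor_minus_left: "lor (- x) z = - lor x z"
  and lor_minus_right: "lor z (- x) = - lor z x"
  by (simp_all add: lor_def inner_add_left inner_add_right inner_diff_left inner_diff_right
      algebra_simps)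

lemma lor_zero_left [simp]: "lor 0 z = 0" and lor_zero_right [simp]: "lor z 0 = 0"
  by (simp_all add: lor_def)

lemma lor_sum_left: "lor (\<Sum>i\<in>I. f i) z = (\<Sum>i\<in>I. lor (f i) z)"
  by (induction I rule: infinite_finite_induct) (auto simp: lor_add_left)

lemma lor_sum_right: "lor z (\<Sum>i\<in>I. f i) = (\<Sum>i\<in>I. lor z (f i))"
  by (induction I rule: infinite_finite_induct) (auto simp: lor_add_right)

lemmas lor_simps = lor_add_left lor_add_right lor_diff_left lor_diff_right lor_scaleR_left
  lor_scaleR_right lor_minus_left lor_minus_right lor_sum_left lor_sum_right

lemma orthogonal_timelike:
  assumes "lor n n = -1" "lor x n = 0"
  shows orthogonal_timelike_nonneg: "lor x x \<ge> 0"
    and orthogonal_timelike_eq_0: "lor x x = 0 \<Longrightarrow> x = 0"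
proof -
  obtain a b where n: "n = (a, b)" by (cases n)
  obtain x0 y where x: "x = (x0, y)" by (cases x)
  have nb: "a\<^sup>2 = 1 + (norm b)\<^sup>2"
    using assms(1) n by (simp add: lor_def power2_norm_eq_inner power2_eq_square[symmetric])
  have xa: "x0 * a = inner y b" using assms(2) n x by (simp add: lor_def)
  have "(x0 * a)\<^sup>2 \<le> (norm y)\<^sup>2 * (norm b)\<^sup>2"
    using xa Cauchy_Schwarz_ineq[of y b] by (simp add: power2_norm_eq_inner)
  hence key: "a\<^sup>2 * ((norm y)\<^sup>2 - x0\<^sup>2) \<ge> (norm y)\<^sup>2"
    using nb by (simp add: power_mult_distrib algebra_simps)
  have xx: "lor x x = (norm y)\<^sup>2 - x0\<^sup>2"
    using x by (simp add: lor_def power2_norm_eq_inner power2_eq_square[symmetric])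
  have "a\<^sup>2 \<ge> 1" using nb by simp
  show "lor x x \<ge> 0"
  proof (rule ccontr)
    assume "\<not> lor x x \<ge> 0"
    hence "a\<^sup>2 * ((norm y)\<^sup>2 - x0\<^sup>2) < 0" using \<open>a\<^sup>2 \<ge> 1\<close> xx by (intro mult_pos_neg) auto
    thus False using key zero_le_power2[of "norm y"] by linarith
  qed
  assume "lor x x = 0"
  hence "(norm y)\<^sup>2 \<le> 0" using key xx by simp
  hence "y = 0" using zero_le_power2[of "norm y"] by simp
  moreover have "x0 = 0" using xa \<open>y = 0\<close> \<open>a\<^sup>2 \<ge> 1\<close> by (cases "a = 0") auto
  ultimately show "x = 0" using x by (simp add: zero_prod_def)
qed

lemma lightcone_sphere_iff: "v \<in> lightcone_sphere \<longleftrightarrow> fst v = 1 \<and> snd v \<bullet> snd v = 1"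
  by (auto simp: lightcone_sphere_def lor_def)

lemma ltilde_in_lightcone_sphere:
  assumes "lor p p = 0" "p \<noteq> 0"
  shows "fst p \<noteq> 0" "ltilde p \<in> lightcone_sphere"
proof -
  show "fst p \<noteq> 0"
  proof
    assume "fst p = 0"
    hence "snd p = 0" using assms(1) by (simp add: lor_def)
    thus False using \<open>fst p = 0\<close> assms(2) by (simp add: prod_eq_iff)
  qed
  thus "ltilde p \<in> lightcone_sphere"
    using assms(1) by (simp add: lightcone_sphere_def ltilde_def lor_scaleR_left lor_scaleR_right)
qed

definition dltilde :: "'n::finite mink \<Rightarrow> 'n mink \<Rightarrow> 'n mink" where
  "dltilde p v = (1 / fst p) *\<^sub>R v - (fst v / (fst p)\<^sup>2) *\<^sub>R p"

lemma has_derivative_ltilde: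
  fixes \<nu> :: "real \<Rightarrow> 'n::finite mink"
  assumes "(\<nu> has_derivative (\<lambda>h. h *\<^sub>R \<nu>')) (at 0)" "fst (\<nu> 0) \<noteq> 0"
  shows "((\<lambda>t. ltilde (\<nu> t)) has_derivative (\<lambda>h. h *\<^sub>R dltilde (\<nu> 0) \<nu>')) (at 0)"
proof -
  have "((\<lambda>t. inverse (fst (\<nu> t)) *\<^sub>R \<nu> t) has_derivative
      (\<lambda>h. inverse (fst (\<nu> 0)) *\<^sub>R (h *\<^sub>R \<nu>')
         - (inverse (fst (\<nu> 0)) * fst (h *\<^sub>R \<nu>') * inverse (fst (\<nu> 0))) *\<^sub>R \<nu> 0)) (at 0)"
    using has_derivative_scaleR[OF Deriv.has_derivative_inverse[OF assms(2) has_derivative_fst[OF assms(1)]]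
        assms(1)] by (simp add: algebra_simps)
  moreover have "(\<lambda>h. inverse (fst (\<nu> 0)) *\<^sub>R (h *\<^sub>R \<nu>')
         - (inverse (fst (\<nu> 0)) * fst (h *\<^sub>R \<nu>') * inverse (fst (\<nu> 0))) *\<^sub>R \<nu> 0)
      = (\<lambda>h. h *\<^sub>R dltilde (\<nu> 0) \<nu>')"
    by (auto simp: dltilde_def algebra_simps power2_eq_square divide_inverse)
  ultimately show ?thesis unfolding ltilde_def by (simp add: divide_inverse)
qed

lemma lightcone_sphere_velocity:
  fixes \<phi> :: "real \<Rightarrow> 'n::finite mink"
  assumes "e > 0" "\<And>t. t \<in> {-e<..<e} \<Longrightarrow> \<phi> t \<in> lightcone_sphere"
    and "(\<phi> has_derivative (\<lambda>h. h *\<^sub>R w)) (at 0)"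
  shows "fst w = 0" "lor (\<phi> 0) w = 0"
proof -
  have S: "open {-e<..<e}" "0 \<in> {-e<..<e}" using assms(1) by auto
  have "(\<lambda>h. fst (h *\<^sub>R w)) = (\<lambda>h. 0)"
    by (rule has_derivative_zero_if_locally_constant[OF S, where f="\<lambda>t. fst (\<phi> t)" and k=1])
      (use assms(2) has_derivative_fst[OF assms(3)] in \<open>auto simp: lightcone_sphere_def\<close>)
  from fun_cong[OF this, of 1] show "fst w = 0" by simp
  have "(\<lambda>h. lor (\<phi> 0) (h *\<^sub>R w) + lor (h *\<^sub>R w) (\<phi> 0)) = (\<lambda>h. 0)"
    by (rule has_derivative_zero_if_locally_constant[OF S, where f="\<lambda>t. lor (\<phi> t) (\<phi> t)" and k=0])
      (use assms(2) has_derivative_lor[OF assms(3) assms(3)] in \<open>auto simp: lightcone_sphere_def\<close>)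
  from fun_cong[OF this, of 1] show "lor (\<phi> 0) w = 0" by (simp add: lor_sym[of w])
qed

text \<open>The normalising factor is stationary at 0, so it does not contribute to the velocity.\<close>
lemma has_derivative_normalised_curve:
  fixes P E :: "real \<Rightarrow> 'b::real_normed_vector" and Q :: "real \<Rightarrow> real"
  assumes "(P has_derivative (\<lambda>h. h *\<^sub>R P')) (at 0)" "(E has_derivative E') (at 0)"
    and "(Q has_derivative Q') (at 0)"
  shows "((\<lambda>t. (1 + t * t * Q t) powr (-1/2) *\<^sub>R (P t + t *\<^sub>R E t)) has_derivative
           (\<lambda>h. h *\<^sub>R (P' + E 0))) (at 0)"
proof -
  have "((\<lambda>t. (1 + t * t * Q t) powr (-1/2)) has_derivative (\<lambda>h. 0)) (at 0)"
    using has_derivative_powr[OF _ has_derivative_const[of "-1/2"], of "\<lambda>t. 1 + t * t * Q t"]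
    by (auto intro!: derivative_eq_intros assms(3))
  from has_derivative_scaleR[OF this has_derivative_add[OF assms(1) has_derivative_scaleR[OF has_derivative_ident assms(2)]]]
  show ?thesis by (simp add: scaleR_add_right)
qed

lemma tangent_set_lightcone_sphere_subset:
  "tangent_set lightcone_sphere v \<subseteq> {w. fst w = 0 \<and> lor v w = 0}"
proof
  fix w assume "w \<in> tangent_set lightcone_sphere v"
  then obtain \<gamma> e where g: "w = vector_derivative \<gamma> (at 0)" "e > 0" "smooth_on {-e<..<e} \<gamma>"
    "\<gamma> ` {-e<..<e} \<subseteq> lightcone_sphere" "\<gamma> 0 = v"
    unfolding tangent_set_def curve_through_def by blast
  have d: "(\<gamma> has_derivative (\<lambda>h. h *\<^sub>R w)) (at 0)"
    using smooth_on_has_vector_derivative[OF g(2,3)] g(1) unfolding has_vector_derivative_def by simp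
  have "\<gamma> t \<in> lightcone_sphere" if "t \<in> {-e<..<e}" for t using g(4) that by blast
  from lightcone_sphere_velocity[OF g(2) this d] g(5)
  show "w \<in> {w. fst w = 0 \<and> lor v w = 0}" by simp
qed

lemma in_tangent_set_lightcone_sphere:
  assumes v: "v \<in> lightcone_sphere" and w: "fst w = 0" "lor v w = 0"
  shows "w \<in> tangent_set lightcone_sphere v"
proof -
  obtain s where vs: "v = (1, s)" and ss: "s \<bullet> s = 1"
    using v unfolding lightcone_sphere_iff by (cases v) auto
  obtain b where wb: "w = (0, b)" using w by (cases w) auto
  have sb: "s \<bullet> b = 0" using w vs wb by (simp add: lor_def)
  define B where "B = b \<bullet> b"
  have pos: "1 + t * t * B > 0" for t
    unfolding B_def by (simp add: add_pos_nonneg)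
  define \<gamma> where "\<gamma> = (\<lambda>t. (1::real, (1 + t * t * B) powr (-1/2) *\<^sub>R (s + t *\<^sub>R b)))"
  have S: "open {-1<..<1::real}" by simp
  have "smooth_on {-1<..<1} \<gamma>"
    unfolding smooth_on_def \<gamma>_def
    by (intro allI Ck_on_Pair[OF S] Ck_on_const Ck_on_scaleR[OF S] Ck_on_powr[OF S] Ck_on_add[OF S]
        Ck_on_mult[OF S] Ck_on_id pos)
  moreover have "\<gamma> t \<in> lightcone_sphere" for t
  proof -
    have "(s + t *\<^sub>R b) \<bullet> (s + t *\<^sub>R b) = 1 + t * t * B"
      using ss sb unfolding B_def by (simp add: inner_add_left inner_add_right inner_commute)
    thus ?thesis
      using pos[of t] by (simp add: \<gamma>_def lightcone_sphere_iff powr_add[symmetric] powr_minus_divide)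
  qed
  ultimately have "curve_through lightcone_sphere v \<gamma>"
    unfolding curve_through_def using vs by (auto simp: \<gamma>_def intro!: exI[of _ 1])
  moreover have "(\<gamma> has_derivative (\<lambda>h. h *\<^sub>R w)) (at 0)"
  proof -
    have "((\<lambda>t. (1 + t * t * B) powr (-1/2) *\<^sub>R (s + t *\<^sub>R b)) has_derivative (\<lambda>h. h *\<^sub>R (0 + b))) (at 0)"
      by (rule has_derivative_normalised_curve) (auto intro!: derivative_eq_intros)
    thus ?thesis
      unfolding \<gamma>_def wb using has_derivative_Pair[OF has_derivative_const[of 1]] by fastforce
  qed
  hence "vector_derivative \<gamma> (at 0) = w"
    using vector_derivative_at unfolding has_vector_derivative_def by blast
  ultimately show ?thesis unfolding tangent_set_def by blast
qed

lemma tangent_set_lightcone_sphere: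
  "v \<in> lightcone_sphere \<Longrightarrow> tangent_set lightcone_sphere v = {w. fst w = 0 \<and> lor v w = 0}"
  using tangent_set_lightcone_sphere_subset in_tangent_set_lightcone_sphere by blast

section \<open>Spacelike embeddings with a timelike normal field\<close>

lemma subspace_nor_space: "subspace (nor_space X u)"
  by (auto simp: subspace_def nor_space_def lor_simps)

lemmas nor_space_add = subspace_add[OF subspace_nor_space]
  and nor_space_diff = subspace_diff[OF subspace_nor_space]
  and nor_space_scaleR = subspace_scale[OF subspace_nor_space]
  and nor_space_sum = subspace_sum[OF subspace_nor_space]

locale spacelike_timelike_normal =
  fixes U :: "(real^'s::finite) set" and X :: "real^'s \<Rightarrow> 'n::finite mink"
    and nT :: "real^'s \<Rightarrow> 'n mink"
  assumes open_U: "open U" and embedding: "spacelike_embedding U X"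
    and normal: "future_unit_timelike_normal U X nT"
begin

abbreviation DX :: "real^'s \<Rightarrow> real^'s \<Rightarrow> 'n mink" where
  "DX u \<equiv> frechet_derivative X (at u)"

definition Xu :: "real^'s \<Rightarrow> 's \<Rightarrow> 'n mink" where
  "Xu u j = DX u (axis j 1)"

definition DXu :: "real^'s \<Rightarrow> 's \<Rightarrow> real^'s \<Rightarrow> 'n mink" where
  "DXu u j = frechet_derivative (\<lambda>x. Xu x j) (at u)"

definition gram :: "real^'s \<Rightarrow> real^'s^'s" where
  "gram u = (\<chi> i j. lor (Xu u i) (Xu u j))"

lemma Ck_on_X: "Ck_on k U X"
  using embedding unfolding spacelike_embedding_def smooth_on_def by simp

lemma Ck_on_Xu: "Ck_on k U (\<lambda>x. Xu x j)"
  using Ck_on_X[of "Suc k"] unfolding Xu_def by simp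

lemma Ck_on_nT: "Ck_on k U nT"
  using normal unfolding future_unit_timelike_normal_def smooth_on_def by simp

lemma X_has_derivative: "u \<in> U \<Longrightarrow> (X has_derivative DX u) (at u)"
  using Ck_on_Suc_has_derivative[OF open_U Ck_on_X] .

lemma Xu_has_derivative: "u \<in> U \<Longrightarrow> ((\<lambda>x. Xu x j) has_derivative DXu u j) (at u)"
  unfolding DXu_def using Ck_on_Suc_has_derivative[OF open_U Ck_on_Xu] .

lemma nT_has_derivative: "u \<in> U \<Longrightarrow> (nT has_derivative frechet_derivative nT (at u)) (at u)"
  using Ck_on_Suc_has_derivative[OF open_U Ck_on_nT] .

lemma nT_normal_unit: "u \<in> U \<Longrightarrow> nT u \<in> nor_space X u" "u \<in> U \<Longrightarrow> lor (nT u) (nT u) = -1"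
  using normal unfolding future_unit_timelike_normal_def by auto

lemma inv_into_X: "u \<in> U \<Longrightarrow> inv_into U X (X u) = u"
  using embedding homeomorphism_apply1 unfolding spacelike_embedding_def by blast

lemma continuous_on_inv_into_X: "continuous_on (X ` U) (inv_into U X)"
  using embedding unfolding spacelike_embedding_def homeomorphism_def by blast

lemma linear_DX: "u \<in> U \<Longrightarrow> linear (DX u)"
  using X_has_derivative has_derivative_linear by blast

lemma DX_expand: "u \<in> U \<Longrightarrow> DX u a = (\<Sum>j\<in>UNIV. a$j *\<^sub>R Xu u j)"
  using linear_axis_expansion[OF linear_DX] by (simp add: Xu_def)

lemma inj_DX: "u \<in> U \<Longrightarrow> inj (DX u)"
  using embedding unfolding spacelike_embedding_def by blast

lemma DX_eq_0_iff: "u \<in> U \<Longrightarrow> DX u a = 0 \<longleftrightarrow> a = 0"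
  using inj_eq[OF inj_DX, of u a 0] linear_0[OF linear_DX] by simp

lemma DX_spacelike: "u \<in> U \<Longrightarrow> a \<noteq> 0 \<Longrightarrow> lor (DX u a) (DX u a) > 0"
  using embedding DX_eq_0_iff unfolding spacelike_embedding_def tan_space_def by blast

lemma nor_space_iff: "u \<in> U \<Longrightarrow> \<nu> \<in> nor_space X u \<longleftrightarrow> (\<forall>j. lor \<nu> (Xu u j) = 0)"
proof
  assume "\<nu> \<in> nor_space X u"
  thus "\<forall>j. lor \<nu> (Xu u j) = 0" unfolding nor_space_def tan_space_def Xu_def by blast
next
  assume "u \<in> U" "\<forall>j. lor \<nu> (Xu u j) = 0"
  hence "lor \<nu> (DX u a) = 0" for a by (simp add: DX_expand lor_simps)
  thus "\<nu> \<in> nor_space X u" unfolding nor_space_def tan_space_def by blast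
qed

lemma lor_DX_nor: "\<nu> \<in> nor_space X u \<Longrightarrow> lor \<nu> (DX u a) = 0"
  unfolding nor_space_def tan_space_def by blast

lemma tan_nor_eq_0: "u \<in> U \<Longrightarrow> DX u a \<in> nor_space X u \<Longrightarrow> a = 0"
  using DX_spacelike[of u a] lor_DX_nor[of "DX u a" u a] by force

lemma gram_mult: "u \<in> U \<Longrightarrow> (gram u *v c) $ i = lor (Xu u i) (DX u c)"
  by (simp add: gram_def matrix_vector_mult_def DX_expand lor_simps mult.commute)

lemma det_gram_nonzero: "u \<in> U \<Longrightarrow> det (gram u) \<noteq> 0"
proof
  assume u: "u \<in> U" and "det (gram u) = 0"
  then obtain c where c: "c \<noteq> 0" "gram u *v c = 0" using det_eq_0_iff_kernel by blast
  have "lor (DX u c) (DX u c) = (\<Sum>i\<in>UNIV. c$i * (gram u *v c) $ i)"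
    by (subst (1) DX_expand[OF u]) (simp add: lor_simps gram_mult[OF u])
  also have "\<dots> = 0" using c(2) by simp
  finally show False using DX_spacelike[OF u c(1)] by simp
qed

lemma tangential_part:
  assumes "u \<in> U"
  shows "w - DX u (cramer_sol (gram u) (\<chi> i. lor (Xu u i) w)) \<in> nor_space X u"
  using cramer_sol[OF det_gram_nonzero[OF assms]] gram_mult[OF assms] assms
  by (auto simp: nor_space_iff lor_simps lor_sym vec_eq_iff)

lemma proj_tan_eq: "u \<in> U \<Longrightarrow> w - DX u a \<in> nor_space X u \<Longrightarrow> proj_tan X u w = DX u a"
  unfolding proj_tan_def
proof (rule the_equality)
  assume u: "u \<in> U" and a: "w - DX u a \<in> nor_space X u"
  show "DX u a \<in> tan_space X u \<and> w - DX u a \<in> nor_space X u" using a by (simp add: tan_space_def)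
  fix t assume t: "t \<in> tan_space X u \<and> w - t \<in> nor_space X u"
  then obtain b where b: "t = DX u b" unfolding tan_space_def by blast
  have "DX u (b - a) \<in> nor_space X u"
    using nor_space_diff[OF a, of "w - t"] t b linear_diff[OF linear_DX[OF u]] by simp
  hence "b - a = 0" by (rule tan_nor_eq_0[OF u])
  thus "t = DX u a" using b by simp
qed

lemma shape_op_DX:
  "u \<in> U \<Longrightarrow> shape_op X \<nu> u (DX u a) = - proj_tan X u (frechet_derivative \<nu> (at u) a)"
  unfolding shape_op_def using inj_DX by (simp add: inj_eq)

lemma shape_matrix:
  assumes u: "u \<in> U" and lin: "linear (frechet_derivative \<nu> (at u))"
  defines "A \<equiv> shape_matrix X \<nu> u"
  shows shape_op_eq_shape_matrix: "shape_op X \<nu> u (DX u a) = DX u (A *v a)"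
    and shape_matrix_normal: "frechet_derivative \<nu> (at u) a + DX u (A *v a) \<in> nor_space X u"
proof -
  define D where "D = frechet_derivative \<nu> (at u)"
  define c where "c j = cramer_sol (gram u) (\<chi> i. lor (Xu u i) (D (axis j 1)))" for j
  have c: "D (axis j 1) - DX u (c j) \<in> nor_space X u" for j
    unfolding c_def by (rule tangential_part[OF u])
  define B :: "real^'s^'s" where "B = (\<chi> i j. - (c j $ i))"
  have Bc: "B *v a = - (\<Sum>j\<in>UNIV. a$j *\<^sub>R c j)" for a
    by (simp add: B_def matrix_vector_mult_def vec_eq_iff sum_negf mult.commute)
  have normal: "D a + DX u (B *v a) \<in> nor_space X u" for a
  proof -
    have "D a + DX u (B *v a) = (\<Sum>j\<in>UNIV. a$j *\<^sub>R (D (axis j 1) - DX u (c j)))"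
      using linear_axis_expansion[OF lin[folded D_def], of a] Bc linear_DX[OF u]
      by (simp add: linear_sum linear_scale linear_neg scaleR_diff_right sum_subtractf)
    thus ?thesis using c by (auto intro!: nor_space_sum nor_space_scaleR)
  qed
  have op: "shape_op X \<nu> u (DX u a) = DX u (B *v a)" for a
  proof -
    have "D a - DX u (- (B *v a)) \<in> nor_space X u"
      using normal[of a] linear_neg[OF linear_DX[OF u]] by simp
    hence "proj_tan X u (D a) = DX u (- (B *v a))" by (rule proj_tan_eq[OF u])
    thus ?thesis using shape_op_DX[OF u] linear_neg[OF linear_DX[OF u]] by (simp add: D_def)
  qed
  have expand: "(\<Sum>i\<in>UNIV. M$i$j *\<^sub>R DX u (axis i 1)) = DX u (M *v axis j 1)" for M :: "real^'s^'s" and j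
    using linear_axis_expansion[OF linear_DX[OF u], of "M *v axis j 1"]
    by (simp add: matrix_vector_mult_basis column_def)
  have "A = B"
    unfolding A_def shape_matrix_def
  proof (rule the_equality)
    show "\<forall>j. shape_op X \<nu> u (DX u (axis j 1)) = (\<Sum>i\<in>UNIV. B$i$j *\<^sub>R DX u (axis i 1))"
      using op by (simp add: expand)
    fix B' assume "\<forall>j. shape_op X \<nu> u (DX u (axis j 1)) = (\<Sum>i\<in>UNIV. B'$i$j *\<^sub>R DX u (axis i 1))"
    hence "DX u (B' *v axis j 1) = DX u (B *v axis j 1)" for j using op by (simp add: expand)
    hence "B' *v axis j 1 = B *v axis j 1" for j using inj_DX[OF u] by (simp add: inj_eq)
    thus "B' = B" by (simp add: matrix_vector_mult_basis column_def vec_eq_iff)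
  qed
  thus "shape_op X \<nu> u (DX u a) = DX u (A *v a)"
    and "frechet_derivative \<nu> (at u) a + DX u (A *v a) \<in> nor_space X u"
    using op normal D_def by auto
qed

lemma lor_Xu_shape_matrix:
  assumes "u \<in> U" "linear (frechet_derivative \<nu> (at u))"
  shows "lor (Xu u j) (frechet_derivative \<nu> (at u) a) = - ((gram u ** shape_matrix X \<nu> u) *v a) $ j"
  using shape_matrix_normal[OF assms, of a] gram_mult[OF assms(1)] assms(1)
  by (simp add: nor_space_iff lor_simps lor_sym[of "Xu u j"] matrix_vector_mul_assoc[symmetric]
      eq_neg_iff_add_eq_0)

text \<open>Weingarten formula, from differentiating \<^term>\<open>lor (Xu x j) (\<nu> x) = 0\<close>.\<close>
lemma lor_DXu_normal:
  assumes "open V" "V \<subseteq> U" "u \<in> V" and \<nu>: "(\<nu> has_derivative D\<nu>) (at u)"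
    and "\<And>x. x \<in> V \<Longrightarrow> \<nu> x \<in> nor_space X x"
  shows "lor (DXu u j h) (\<nu> u) = - lor (Xu u j) (D\<nu> h)"
proof -
  have zero: "lor (Xu x j) (\<nu> x) = 0" if "x \<in> V" for x
    using assms(5)[OF that] nor_space_iff[of x "\<nu> x"] assms(2) that lor_sym[of "Xu x j"] by auto
  have "u \<in> U" using assms(2,3) by blast
  have "(\<lambda>h. lor (Xu u j) (D\<nu> h) + lor (DXu u j h) (\<nu> u)) = (\<lambda>h. 0)"
    by (rule has_derivative_zero_if_locally_constant[OF assms(1,3) zero
        has_derivative_lor[OF Xu_has_derivative[OF \<open>u \<in> U\<close>] \<nu>]])
  from fun_cong[OF this, of h] show ?thesis by linarith
qed

lemma height_has_derivative:
  "u \<in> U \<Longrightarrow> ((\<lambda>x. lor (X x) v) has_derivative (\<lambda>a. lor (DX u a) v)) (at u)"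
  using has_derivative_lor[OF X_has_derivative has_derivative_const] by simp

lemma pderiv_height:
  assumes "u \<in> U"
  shows "pderiv (\<lambda>x. lor (X x) v) u j = lor (Xu u j) v"
  using frechet_derivative_at[OF height_has_derivative[OF assms], symmetric]
  by (simp add: pderiv_def Xu_def)

lemma hessian_height: "u \<in> U \<Longrightarrow> hessian (\<lambda>x. lor (X x) v) u $ i $ j = lor (DXu u j (axis i 1)) v"
proof -
  assume u: "u \<in> U"
  have "((\<lambda>x. pderiv (\<lambda>x. lor (X x) v) x j) has_derivative (\<lambda>a. lor (DXu u j a) v)) (at u)"
    using has_derivative_transform_within_open[OF _ open_U u, where f="\<lambda>x. lor (Xu x j) v"]
      has_derivative_lor[OF Xu_has_derivative[OF u] has_derivative_const[of v]] pderiv_height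
    by simp
  hence "frechet_derivative (\<lambda>x. pderiv (\<lambda>x. lor (X x) v) x j) (at u) = (\<lambda>a. lor (DXu u j a) v)"
    by (rule frechet_derivative_at[symmetric])
  hence "pderiv (\<lambda>x. pderiv (\<lambda>x. lor (X x) v) x j) u i = lor (DXu u j (axis i 1)) v"
    unfolding pderiv_def[of "\<lambda>x. pderiv (\<lambda>x. lor (X x) v) x j"] by simp
  thus ?thesis by (simp add: hessian_def)
qed

lemma N1_lightlike:
  assumes u: "u \<in> U" and \<xi>: "\<xi> \<in> N1 X nT u"
  shows "lor (nT u + \<xi>) (nT u + \<xi>) = 0" "lor (nT u + \<xi>) (nT u) = -1" "nT u + \<xi> \<in> nor_space X u"
    and "fst (nT u + \<xi>) \<noteq> 0" "ltilde (nT u + \<xi>) \<in> lightcone_sphere"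
proof -
  show "lor (nT u + \<xi>) (nT u + \<xi>) = 0" "lor (nT u + \<xi>) (nT u) = -1"
    using nT_normal_unit[OF u] \<xi> by (auto simp: N1_def lor_simps lor_sym[of "nT u" \<xi>])
  moreover have "nT u + \<xi> \<noteq> 0" using calculation(2) by auto
  ultimately show "fst (nT u + \<xi>) \<noteq> 0" "ltilde (nT u + \<xi>) \<in> lightcone_sphere"
    using ltilde_in_lightcone_sphere by blast+
  show "nT u + \<xi> \<in> nor_space X u" using nT_normal_unit[OF u] \<xi> by (auto simp: N1_def nor_space_add)
qed

lemma LGt_eq: "u \<in> U \<Longrightarrow> LGt U X nT (X u, \<xi>) = ltilde (nT u + \<xi>)"
  by (simp add: LGt_def inv_into_X)

lemma N1_bundle_memD:
  assumes "q \<in> N1_bundle U X nT"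
  shows "inv_into U X (fst q) \<in> U" "X (inv_into U X (fst q)) = fst q"
    and "snd q \<in> N1 X nT (inv_into U X (fst q))"
  using assms by (auto simp: N1_bundle_def inv_into_X)

lemma N1_normalise:
  assumes u: "u \<in> U" and \<zeta>: "\<zeta> \<in> N1 X nT u"
    and \<eta>: "\<eta> \<in> nor_space X u" "lor \<eta> (nT u) = 0" "lor \<eta> \<zeta> = 0"
  shows N1_normalise_pos: "1 + t * t * lor \<eta> \<eta> > 0"
    and N1_normalise_mem: "(1 + t * t * lor \<eta> \<eta>) powr (-1/2) *\<^sub>R (\<zeta> + t *\<^sub>R \<eta>) \<in> N1 X nT u"
proof -
  have \<zeta>': "\<zeta> \<in> nor_space X u" "lor \<zeta> \<zeta> = 1" "lor \<zeta> (nT u) = 0" using \<zeta> by (auto simp: N1_def)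
  show pos: "1 + t * t * lor \<eta> \<eta> > 0"
    using orthogonal_timelike_nonneg[OF nT_normal_unit(2)[OF u] \<eta>(2)] by (simp add: add_pos_nonneg)
  have "lor (\<zeta> + t *\<^sub>R \<eta>) (\<zeta> + t *\<^sub>R \<eta>) = 1 + t * t * lor \<eta> \<eta>"
    using \<zeta>'(2) \<eta>(3) by (simp add: lor_simps lor_sym[of \<zeta> \<eta>])
  hence "lor ((1 + t * t * lor \<eta> \<eta>) powr (-1/2) *\<^sub>R (\<zeta> + t *\<^sub>R \<eta>))
      ((1 + t * t * lor \<eta> \<eta>) powr (-1/2) *\<^sub>R (\<zeta> + t *\<^sub>R \<eta>))
      = (1 + t * t * lor \<eta> \<eta>) powr (-1/2) * (1 + t * t * lor \<eta> \<eta>) powr (-1/2) * (1 + t * t * lor \<eta> \<eta>)"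
    by (simp add: lor_scaleR_left lor_scaleR_right mult.assoc)
  also have "\<dots> = 1" using pos by (simp add: powr_add[symmetric] powr_minus_divide)
  finally show "(1 + t * t * lor \<eta> \<eta>) powr (-1/2) *\<^sub>R (\<zeta> + t *\<^sub>R \<eta>) \<in> N1 X nT u"
    using \<zeta>' \<eta> by (auto simp: N1_def lor_simps intro!: nor_space_scaleR nor_space_add)
qed

lemma height_critical_iff_LGt:
  assumes u: "u \<in> U" and v: "v \<in> lightcone_sphere"
  shows "(\<forall>i. pderiv (\<lambda>x. lor (X x) v) u i = 0) \<longleftrightarrow> (\<exists>\<xi>\<in>N1 X nT u. v = LGt U X nT (X u, \<xi>))"
proof -
  have "(\<forall>i. pderiv (\<lambda>x. lor (X x) v) u i = 0) \<longleftrightarrow> v \<in> nor_space X u"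
    using pderiv_height[OF u] nor_space_iff[OF u] lor_sym[of "Xu u _" v] by simp
  also have "\<dots> \<longleftrightarrow> (\<exists>\<xi>\<in>N1 X nT u. v = LGt U X nT (X u, \<xi>))"
  proof
    assume vn: "v \<in> nor_space X u"
    have vl: "lor v v = 0" "fst v = 1" using v unfolding lightcone_sphere_def by auto
    define l where "l = - lor v (nT u)"
    have "l \<noteq> 0"
      using orthogonal_timelike_eq_0[OF nT_normal_unit(2)[OF u], of v] vl by (auto simp: l_def)
    define \<xi> where "\<xi> = (1/l) *\<^sub>R v - nT u"
    have "\<xi> \<in> nor_space X u"
      unfolding \<xi>_def using vn nT_normal_unit(1)[OF u] by (intro nor_space_diff nor_space_scaleR)
    moreover have "lor \<xi> \<xi> = 1" "lor \<xi> (nT u) = 0"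
      unfolding \<xi>_def using nT_normal_unit(2)[OF u] vl \<open>l \<noteq> 0\<close>
      by (simp_all add: lor_simps lor_sym[of "nT u" v] l_def field_simps)
    ultimately have "\<xi> \<in> N1 X nT u" by (simp add: N1_def)
    moreover have "v = LGt U X nT (X u, \<xi>)"
      using \<open>l \<noteq> 0\<close> vl by (simp add: LGt_eq[OF u] ltilde_def \<xi>_def)
    ultimately show "\<exists>\<xi>\<in>N1 X nT u. v = LGt U X nT (X u, \<xi>)" by blast
  next
    assume "\<exists>\<xi>\<in>N1 X nT u. v = LGt U X nT (X u, \<xi>)"
    then obtain \<xi> where \<xi>: "\<xi> \<in> N1 X nT u" "v = ltilde (nT u + \<xi>)" using LGt_eq[OF u] by auto
    show "v \<in> nor_space X u"
      using \<xi>(2) nor_space_scaleR[OF N1_lightlike(3)[OF u \<xi>(1)]] by (simp add: ltilde_def)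
  qed
  finally show ?thesis .
qed

lemma bundle_curve_base_has_derivative:
  assumes e: "e > 0" and "smooth_on {-e<..<e} \<gamma>" and \<gamma>: "\<gamma> ` {-e<..<e} \<subseteq> N1_bundle U X nT"
    and "\<gamma> 0 = (X u0, \<xi>0)" and u0: "u0 \<in> U"
  shows "\<exists>a. ((\<lambda>t. inv_into U X (fst (\<gamma> t))) has_derivative (\<lambda>h. h *\<^sub>R a)) (at 0)"
proof -
  define S where "S = {-e<..<e::real}"
  have S: "open S" "0 \<in> S" using e unfolding S_def by auto
  have "fst (\<gamma> t) \<in> X ` U" if "t \<in> S" for t
  proof -
    have "\<gamma> t \<in> N1_bundle U X nT" using \<gamma> that by (auto simp: S_def)
    from N1_bundle_memD(1,2)[OF this] show ?thesis by (metis image_eqI)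
  qed
  hence sub: "(\<lambda>t. fst (\<gamma> t)) ` S \<subseteq> X ` U" by blast
  obtain g' where "(\<gamma> has_derivative (\<lambda>h. h *\<^sub>R g')) (at 0)"
    using smooth_on_has_vector_derivative[OF assms(1,2)] unfolding has_vector_derivative_def by blast
  from has_derivative_fst[OF this]
  have fst\<gamma>: "((\<lambda>t. fst (\<gamma> t)) has_derivative (\<lambda>h. h *\<^sub>R fst g')) (at 0 within S)"
    by (simp add: has_derivative_at_withinI)
  obtain K where K: "linear K" "K \<circ> DX u0 = id"
    using linear_injective_left_inverse[OF linear_DX[OF u0] inj_DX[OF u0]] by blast
  have "(inv_into U X has_derivative K) (at (X u0) within X ` U)"
    using has_derivative_inverse_within[OF has_derivative_at_withinI[OF X_has_derivative[OF u0]] _ u0 K]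
      continuous_on_inv_into_X u0 inv_into_X
    by (simp add: continuous_on_eq_continuous_within)
  hence "(inv_into U X has_derivative K) (at (fst (\<gamma> 0)) within (\<lambda>t. fst (\<gamma> t)) ` S)"
    using has_derivative_subset[OF _ sub] assms(4) by simp
  from has_derivative_in_compose[OF fst\<gamma> this]
  have "((\<lambda>t. inv_into U X (fst (\<gamma> t))) has_derivative (\<lambda>h. K (h *\<^sub>R fst g'))) (at 0)"
    unfolding at_within_open[OF S(2,1)] .
  thus ?thesis using linear_scale[OF K(1)] by auto
qed

end

section \<open>Curvature at a point and the Hessian of the height function\<close>

locale normal_section_at = spacelike_timelike_normal U X nT
  for U :: "(real^'s::finite) set" and X :: "real^'s \<Rightarrow> 'n::finite mink" and nT +
  fixes u0 :: "real^'s" and \<xi>0 :: "'n mink" and V :: "(real^'s) set" and nS :: "real^'s \<Rightarrow> 'n mink"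
  assumes \<xi>0: "\<xi>0 \<in> N1 X nT u0" and local_sec: "local_section U X nT V nS"
    and u0: "u0 \<in> V" and nS_u0: "nS u0 = \<xi>0"
begin

definition nu :: "real^'s \<Rightarrow> 'n mink" where
  "nu x = nT x + nS x"

definition DnT :: "real^'s \<Rightarrow> 'n mink" where
  "DnT = frechet_derivative nT (at u0)"

definition DnS :: "real^'s \<Rightarrow> 'n mink" where
  "DnS = frechet_derivative nS (at u0)"

definition shape0 :: "real^'s^'s" where
  "shape0 = shape_matrix X nu u0"

definition nu0 :: "'n mink" where
  "nu0 = nT u0 + \<xi>0"

definition c0 :: real where
  "c0 = fst nu0"

lemma open_V: "open V" and V_subset: "V \<subseteq> U" and Ck_on_nS: "Ck_on k V nS"
  and nS_N1: "u \<in> V \<Longrightarrow> nS u \<in> N1 X nT u"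
  using local_sec by (auto simp: local_section_def smooth_on_def)

lemma u0_in_U: "u0 \<in> U"
  using u0 V_subset by blast

lemma nS_has_derivative: "(nS has_derivative DnS) (at u0)"
  unfolding DnS_def by (rule Ck_on_Suc_has_derivative[OF open_V Ck_on_nS u0])

lemma nT_has_derivative_u0: "(nT has_derivative DnT) (at u0)"
  unfolding DnT_def by (rule nT_has_derivative[OF u0_in_U])

lemma linear_DnT: "linear DnT" and linear_DnS: "linear DnS"
  using nT_has_derivative_u0 nS_has_derivative has_derivative_linear by blast+

lemma nu_has_derivative: "(nu has_derivative (\<lambda>h. DnT h + DnS h)) (at u0)"
  unfolding nu_def[abs_def] by (rule has_derivative_add[OF nT_has_derivative_u0 nS_has_derivative])

lemma frechet_derivative_nu: "frechet_derivative nu (at u0) = (\<lambda>h. DnT h + DnS h)"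
  using frechet_derivative_at[OF nu_has_derivative] by simp

lemma linear_Dnu: "linear (frechet_derivative nu (at u0))"
  unfolding frechet_derivative_nu by (rule linear_compose_add[OF linear_DnT linear_DnS])

lemma nu_normal: "x \<in> V \<Longrightarrow> nu x \<in> nor_space X x"
  using N1_lightlike(3) nS_N1 V_subset unfolding nu_def by blast

lemma nu0: "lor nu0 nu0 = 0" "lor nu0 (nT u0) = -1" "nu0 \<in> nor_space X u0" "c0 \<noteq> 0"
  using N1_lightlike[OF u0_in_U \<xi>0] unfolding nu0_def c0_def by auto

lemma LGt_u0: "LGt U X nT (X u0, \<xi>0) = (1/c0) *\<^sub>R nu0"
  by (simp add: LGt_eq[OF u0_in_U] ltilde_def nu0_def c0_def)

lemma shape0_normal: "DnT a + DnS a + DX u0 (shape0 *v a) \<in> nor_space X u0"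
  using shape_matrix_normal[OF u0_in_U linear_Dnu] frechet_derivative_nu unfolding shape0_def by simp

lemma lor_nu0_Dnu: "lor nu0 (DnT a + DnS a) = 0"
proof -
  have "lor (nu x) (nu x) = 0" if "x \<in> V" for x
    using N1_lightlike(1) nS_N1[OF that] V_subset that unfolding nu_def by blast
  from fun_cong[OF has_derivative_zero_if_locally_constant[OF open_V u0 this
      has_derivative_lor[OF nu_has_derivative nu_has_derivative]], of a]
  show ?thesis by (simp add: lor_sym[of "DnT a + DnS a"] nu_def nu0_def nS_u0)
qed

lemma hessian_height_u0:
  "hessian (\<lambda>u. lor (X u) (LGt U X nT (X u0, \<xi>0))) u0 $ i $ j = (gram u0 ** shape0) $ j $ i / c0"
proof -
  have "hessian (\<lambda>u. lor (X u) (LGt U X nT (X u0, \<xi>0))) u0 $ i $ j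
      = lor (DXu u0 j (axis i 1)) (nu u0) / c0"
    using hessian_height[OF u0_in_U, of "LGt U X nT (X u0, \<xi>0)" i j]
    by (simp add: LGt_u0 lor_scaleR_right nu_def nu0_def nS_u0)
  also have "\<dots> = - lor (Xu u0 j) (DnT (axis i 1) + DnS (axis i 1)) / c0"
    using lor_DXu_normal[OF open_V V_subset u0 nu_has_derivative nu_normal] by simp
  also have "\<dots> = (gram u0 ** shape0) $ j $ i / c0"
    using lor_Xu_shape_matrix[OF u0_in_U linear_Dnu, of j "axis i 1"] frechet_derivative_nu
    by (simp add: shape0_def matrix_vector_mult_basis column_def)
  finally show ?thesis .
qed

lemma K_ell_u0: "K_ell X nT nS u0 = det shape0"
  by (simp add: K_ell_def shape0_def nu_def[abs_def])

lemma flat_umbilical_iff_shape0: "flat_umbilical X nT nS u0 \<longleftrightarrow> shape0 = 0"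
proof -
  have "flat_umbilical X nT nS u0 \<longleftrightarrow> (\<forall>a. shape0 *v a = 0)"
    using shape_op_eq_shape_matrix[OF u0_in_U linear_Dnu] DX_eq_0_iff[OF u0_in_U]
    by (auto simp: flat_umbilical_def tan_space_def shape0_def nu_def[abs_def])
  thus ?thesis by (simp add: matrix_eq)
qed

lemma det_hessian_eq_0_iff:
  "det (hessian (\<lambda>u. lor (X u) (LGt U X nT (X u0, \<xi>0))) u0) = 0 \<longleftrightarrow> det shape0 = 0"
proof -
  let ?H = "hessian (\<lambda>u. lor (X u) (LGt U X nT (X u0, \<xi>0))) u0"
  have "?H *v x = (1/c0) *\<^sub>R (transpose (gram u0 ** shape0) *v x)" for x
    by (simp add: vec_eq_iff matrix_vector_mult_def hessian_height_u0 transpose_def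
        sum_distrib_left field_simps del: transpose_matrix_vector)
  hence "det ?H = 0 \<longleftrightarrow> det (transpose (gram u0 ** shape0)) = 0"
    using nu0(4) by (simp add: det_eq_0_iff_kernel del: transpose_matrix_vector det_transpose)
  thus ?thesis using det_gram_nonzero[OF u0_in_U] by (simp add: det_mul)
qed

lemma hessian_eq_0_iff:
  "hessian (\<lambda>u. lor (X u) (LGt U X nT (X u0, \<xi>0))) u0 = 0 \<longleftrightarrow> shape0 = 0"
proof -
  have "hessian (\<lambda>u. lor (X u) (LGt U X nT (X u0, \<xi>0))) u0 = 0 \<longleftrightarrow> gram u0 ** shape0 = 0"
    using nu0(4) by (auto simp: vec_eq_iff hessian_height_u0)
  also have "\<dots> \<longleftrightarrow> shape0 = 0"
    using det_eq_0_iff_kernel[of "gram u0"] det_gram_nonzero[OF u0_in_U]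
    by (auto simp: matrix_eq matrix_vector_mul_assoc[symmetric])
  finally show ?thesis .
qed

end

section \<open>Regular points of the lightcone Gauss map\<close>

context normal_section_at
begin

lemma tangent_set_at_LGt_u0:
  "w \<in> tangent_set lightcone_sphere (LGt U X nT (X u0, \<xi>0)) \<longleftrightarrow> fst w = 0 \<and> lor nu0 w = 0"
proof -
  have "LGt U X nT (X u0, \<xi>0) \<in> lightcone_sphere"
    using N1_lightlike(5)[OF u0_in_U \<xi>0] by (simp add: LGt_eq[OF u0_in_U])
  thus ?thesis using nu0(4) by (simp add: tangent_set_lightcone_sphere LGt_u0 lor_scaleR_left)
qed

lemma nS_normal: "x \<in> V \<Longrightarrow> nS x \<in> nor_space X x"
  using nS_N1 by (simp add: N1_def)

lemma N1_curve_velocity_normal: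
  assumes S: "open S" "0 \<in> S" and on: "\<And>t. t \<in> S \<Longrightarrow> u t \<in> U \<and> \<xi> t \<in> N1 X nT (u t)"
    and u_deriv: "(u has_derivative (\<lambda>h. h *\<^sub>R a)) (at 0)" and u_0: "u 0 = u0"
    and \<xi>_deriv: "(\<xi> has_derivative (\<lambda>h. h *\<^sub>R \<xi>')) (at 0)" and \<xi>_0: "\<xi> 0 = \<xi>0"
  shows "\<xi>' - DnS a \<in> nor_space X u0"
  unfolding nor_space_iff[OF u0_in_U]
proof
  fix j
  have Xu': "((\<lambda>x. Xu x j) has_derivative DXu u0 j) (at (u 0))"
    using Xu_has_derivative[OF u0_in_U] u_0 by simp
  have "lor (\<xi> t) (Xu (u t) j) = 0" if "t \<in> S" for t
    using on[OF that] by (auto simp: N1_def nor_space_iff)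
  from fun_cong[OF has_derivative_zero_if_locally_constant[OF S this
      has_derivative_lor[OF \<xi>_deriv has_derivative_compose[OF u_deriv Xu']]], of 1]
  have "lor \<xi>0 (DXu u0 j a) + lor \<xi>' (Xu u0 j) = 0"
    using u_0 \<xi>_0 by simp
  moreover have "lor (DXu u0 j a) \<xi>0 = - lor (Xu u0 j) (DnS a)"
    using lor_DXu_normal[OF open_V V_subset u0 nS_has_derivative nS_normal] nS_u0 by simp
  ultimately show "lor (\<xi>' - DnS a) (Xu u0 j) = 0"
    by (simp add: lor_simps lor_sym[of \<xi>0] lor_sym[of "DnS a"])
qed

lemma bundle_curve_velocity:
  assumes "curve_through (N1_bundle U X nT) (X u0, \<xi>0) \<gamma>"
  obtains a f where "f \<in> nor_space X u0"
    "((\<lambda>t. LGt U X nT (\<gamma> t)) has_derivative (\<lambda>h. h *\<^sub>R dltilde nu0 (DnT a + DnS a + f))) (at 0)"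
proof -
  obtain e where e: "e > 0" "smooth_on {-e<..<e} \<gamma>" "\<gamma> ` {-e<..<e} \<subseteq> N1_bundle U X nT"
    "\<gamma> 0 = (X u0, \<xi>0)"
    using assms unfolding curve_through_def by blast
  define S where "S = {-e<..<e}"
  have S: "open S" "0 \<in> S" using e(1) by (auto simp: S_def)
  define u where "u t = inv_into U X (fst (\<gamma> t))" for t
  define \<xi> where "\<xi> t = snd (\<gamma> t)" for t
  have on_bundle: "u t \<in> U \<and> \<xi> t \<in> N1 X nT (u t)" if "t \<in> S" for t
  proof -
    have "\<gamma> t \<in> N1_bundle U X nT" using e(3) that by (auto simp: S_def)
    from N1_bundle_memD(1,3)[OF this] show ?thesis by (simp add: u_def \<xi>_def)
  qed
  have at0: "u 0 = u0" "\<xi> 0 = \<xi>0" using e(4) u0_in_U by (simp_all add: u_def \<xi>_def inv_into_X)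
  obtain a where u': "(u has_derivative (\<lambda>h. h *\<^sub>R a)) (at 0)"
    using bundle_curve_base_has_derivative[OF e u0_in_U] unfolding u_def[abs_def] by blast
  obtain g' where "(\<gamma> has_derivative (\<lambda>h. h *\<^sub>R g')) (at 0)"
    using smooth_on_has_vector_derivative[OF e(1,2)] unfolding has_vector_derivative_def by blast
  from has_derivative_snd[OF this]
  have \<xi>': "(\<xi> has_derivative (\<lambda>h. h *\<^sub>R snd g')) (at 0)" by (simp add: \<xi>_def[abs_def])
  have "(nT has_derivative DnT) (at (u 0))" using nT_has_derivative_u0 at0 by simp
  from has_derivative_compose[OF u' this]
  have nTu': "((\<lambda>t. nT (u t)) has_derivative (\<lambda>h. h *\<^sub>R DnT a)) (at 0)"
    using linear_scale[OF linear_DnT] by simp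
  define f where "f = snd g' - DnS a"
  have "f \<in> nor_space X u0"
    unfolding f_def by (rule N1_curve_velocity_normal[OF S on_bundle u' at0(1) \<xi>' at0(2)])
  moreover have "((\<lambda>t. LGt U X nT (\<gamma> t)) has_derivative
      (\<lambda>h. h *\<^sub>R dltilde nu0 (DnT a + DnS a + f))) (at 0)"
  proof -
    have "((\<lambda>t. nT (u t) + \<xi> t) has_derivative (\<lambda>h. h *\<^sub>R (DnT a + DnS a + f))) (at 0)"
      using has_derivative_add[OF nTu' \<xi>'] by (simp add: f_def scaleR_add_right)
    from has_derivative_ltilde[OF this]
    have "((\<lambda>t. ltilde (nT (u t) + \<xi> t)) has_derivative
        (\<lambda>h. h *\<^sub>R dltilde nu0 (DnT a + DnS a + f))) (at 0)"
      using at0 nu0(4) by (simp add: nu0_def c0_def)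
    moreover have "LGt U X nT (\<gamma> t) = ltilde (nT (u t) + \<xi> t)" for t
      by (simp add: LGt_def u_def \<xi>_def)
    ultimately show ?thesis by simp
  qed
  ultimately show thesis using that by blast
qed

lemma differential_image_LGt_u0:
  assumes "w \<in> differential_image (N1_bundle U X nT) (LGt U X nT) (X u0, \<xi>0)"
  shows differential_image_LGt_u0_tangent: "fst w = 0 \<and> lor nu0 w = 0"
    and differential_image_LGt_u0_normal: "\<exists>a. w + (1/c0) *\<^sub>R DX u0 (shape0 *v a) \<in> nor_space X u0"
proof -
  obtain \<gamma> where \<gamma>: "w = vector_derivative (LGt U X nT \<circ> \<gamma>) (at 0)"
    "curve_through (N1_bundle U X nT) (X u0, \<xi>0) \<gamma>"
    using assms unfolding differential_image_def by blast
  obtain a f where f: "f \<in> nor_space X u0" and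
    d: "((\<lambda>t. LGt U X nT (\<gamma> t)) has_derivative (\<lambda>h. h *\<^sub>R dltilde nu0 (DnT a + DnS a + f))) (at 0)"
    using bundle_curve_velocity[OF \<gamma>(2)] by blast
  from d have "((LGt U X nT \<circ> \<gamma>) has_vector_derivative dltilde nu0 (DnT a + DnS a + f)) (at 0)"
    by (simp add: has_vector_derivative_def comp_def)
  hence w: "w = dltilde nu0 (DnT a + DnS a + f)"
    using \<gamma>(1) vector_derivative_at by blast
  obtain e where e: "e > 0" "\<gamma> ` {-e<..<e} \<subseteq> N1_bundle U X nT" "\<gamma> 0 = (X u0, \<xi>0)"
    using \<gamma>(2) unfolding curve_through_def by blast
  have "LGt U X nT (\<gamma> t) \<in> lightcone_sphere" if "t \<in> {-e<..<e}" for t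
  proof -
    have "\<gamma> t \<in> N1_bundle U X nT" using e(2) that by auto
    from N1_lightlike(5)[OF N1_bundle_memD(1,3)[OF this]] show ?thesis by (simp add: LGt_def)
  qed
  from lightcone_sphere_velocity[OF e(1) this d]
  show "fst w = 0 \<and> lor nu0 w = 0"
    using e(3) nu0(4) by (simp add: w LGt_u0 lor_scaleR_left)
  have "w + (1/c0) *\<^sub>R DX u0 (shape0 *v a) = (1/c0) *\<^sub>R (DnT a + DnS a + DX u0 (shape0 *v a))
      + (1/c0) *\<^sub>R f - (fst (DnT a + DnS a + f) / c0\<^sup>2) *\<^sub>R nu0"
    by (simp add: w dltilde_def c0_def algebra_simps)
  also have "\<dots> \<in> nor_space X u0"
    by (intro nor_space_diff nor_space_add[OF nor_space_scaleR[OF shape0_normal]]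
        nor_space_scaleR f nu0(3))
  finally show "\<exists>a. w + (1/c0) *\<^sub>R DX u0 (shape0 *v a) \<in> nor_space X u0" by blast
qed

lemma normal_field_along_line:
  assumes f: "f \<in> nor_space X u0" "lor f (nT u0) = 0" "lor f \<xi>0 = 0"
    and S: "open S" and line: "\<And>t. t \<in> S \<Longrightarrow> u0 + t *\<^sub>R a \<in> V"
  obtains \<eta> where "\<And>k. Ck_on k S \<eta>" "\<eta> 0 = f"
    "\<And>t. t \<in> S \<Longrightarrow> \<eta> t \<in> nor_space X (u0 + t *\<^sub>R a) \<and> lor (\<eta> t) (nT (u0 + t *\<^sub>R a)) = 0
       \<and> lor (\<eta> t) (nS (u0 + t *\<^sub>R a)) = 0"
proof -
  define u where "u t = u0 + t *\<^sub>R a" for t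
  have uU: "u t \<in> U" if "t \<in> S" for t using line[OF that] V_subset by (auto simp: u_def)
  define cs where "cs t = cramer_sol (gram (u t)) (\<chi> i. lor (Xu (u t) i) f)" for t
  define z1 where "z1 t = f - (\<Sum>i\<in>UNIV. cs t $ i *\<^sub>R Xu (u t) i)" for t
  define z2 where "z2 t = z1 t + lor (z1 t) (nT (u t)) *\<^sub>R nT (u t)" for t
  define \<eta> where "\<eta> t = z2 t - lor (z2 t) (nS (u t)) *\<^sub>R nS (u t)" for t
  have "\<eta> t \<in> nor_space X (u t) \<and> lor (\<eta> t) (nT (u t)) = 0 \<and> lor (\<eta> t) (nS (u t)) = 0"
    if t: "t \<in> S" for t
  proof -
    have z1: "z1 t \<in> nor_space X (u t)"
      using tangential_part[OF uU[OF t], of f] by (simp add: z1_def cs_def DX_expand[OF uU[OF t]])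
    have "nS (u t) \<in> N1 X nT (u t)" using nS_N1 line[OF t] by (simp add: u_def)
    thus ?thesis
      using z1 nT_normal_unit[OF uU[OF t]]
      by (auto simp: \<eta>_def z2_def N1_def lor_simps lor_sym[of "nS _" "nT _"]
          intro!: nor_space_add nor_space_diff nor_space_scaleR)
  qed
  moreover have "\<eta> 0 = f"
  proof -
    have "gram u0 *v cs 0 = 0"
      using cramer_sol[OF det_gram_nonzero[OF u0_in_U]] f(1) u0_in_U
      by (simp add: cs_def u_def vec_eq_iff nor_space_iff lor_sym[of "Xu u0 _" f])
    hence "cs 0 = 0" using det_eq_0_iff_kernel det_gram_nonzero[OF u0_in_U] by blast
    thus ?thesis using f(2,3) nS_u0 by (simp add: \<eta>_def z2_def z1_def u_def)
  qed
  moreover have "Ck_on k S \<eta>" for k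
  proof -
    have along_U: "Ck_on k S (\<lambda>t. F (u t))" if "Ck_on k U F" for F :: "real^'s \<Rightarrow> 'n mink"
      using Ck_on_compose_line[OF S open_U _ that] uU by (simp add: u_def)
    have nS_u: "Ck_on k S (\<lambda>t. nS (u t))"
      using Ck_on_compose_line[OF S open_V line Ck_on_nS] by (simp add: u_def)
    have lor_u: "Ck_on k S (\<lambda>t. lor (F t) (G t))" if "Ck_on k S F" "Ck_on k S G" for F G
      using Ck_on_bilinear[OF S bounded_bilinear_lor that] .
    have "Ck_on k S (\<lambda>t. cs t $ i)" for i
      unfolding cs_def using det_gram_nonzero uU
      by (intro Ck_on_cramer_sol S) (auto simp: gram_def intro!: lor_u along_U Ck_on_Xu Ck_on_const)
    hence "Ck_on k S z1"
      unfolding z1_def[abs_def]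
      by (intro Ck_on_diff[OF S] Ck_on_const Ck_on_sum[OF S] Ck_on_scaleR[OF S] along_U Ck_on_Xu)
    thus ?thesis
      unfolding \<eta>_def[abs_def] z2_def[abs_def]
      by (intro Ck_on_diff[OF S] Ck_on_add[OF S] Ck_on_scaleR[OF S] lor_u along_U Ck_on_nT nS_u)
  qed
  ultimately show thesis using that unfolding u_def by blast
qed

lemma N1_curve_along_line:
  assumes f: "f \<in> nor_space X u0" "lor f (nT u0) = 0" "lor f \<xi>0 = 0"
    and S: "open S" "0 \<in> S" and line: "\<And>t. t \<in> S \<Longrightarrow> u0 + t *\<^sub>R a \<in> V"
  obtains \<xi> where "\<And>k. Ck_on k S \<xi>" "\<And>t. t \<in> S \<Longrightarrow> \<xi> t \<in> N1 X nT (u0 + t *\<^sub>R a)" "\<xi> 0 = \<xi>0"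
    "(\<xi> has_derivative (\<lambda>h. h *\<^sub>R (DnS a + f))) (at 0)"
proof -
  obtain \<eta> where \<eta>: "\<And>k. Ck_on k S \<eta>" "\<eta> 0 = f"
    "\<And>t. t \<in> S \<Longrightarrow> \<eta> t \<in> nor_space X (u0 + t *\<^sub>R a) \<and> lor (\<eta> t) (nT (u0 + t *\<^sub>R a)) = 0
       \<and> lor (\<eta> t) (nS (u0 + t *\<^sub>R a)) = 0"
    using normal_field_along_line[OF f S(1) line] by blast
  define Q where "Q t = lor (\<eta> t) (\<eta> t)" for t
  define \<xi> where "\<xi> t = (1 + t * t * Q t) powr (-1/2) *\<^sub>R (nS (u0 + t *\<^sub>R a) + t *\<^sub>R \<eta> t)" for t
  have base: "u0 + t *\<^sub>R a \<in> U" "nS (u0 + t *\<^sub>R a) \<in> N1 X nT (u0 + t *\<^sub>R a)" if "t \<in> S" for t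
    using line[OF that] V_subset nS_N1 by auto
  have Q_pos: "1 + t * t * Q t > 0" if "t \<in> S" for t
    unfolding Q_def using N1_normalise_pos[OF base[OF that]] \<eta>(3)[OF that] by blast
  have Ck_Q: "Ck_on k S Q" for k
    unfolding Q_def[abs_def] by (rule Ck_on_bilinear[OF S(1) bounded_bilinear_lor \<eta>(1) \<eta>(1)])
  have Ck_nS: "Ck_on k S (\<lambda>t. nS (u0 + t *\<^sub>R a))" for k
    using Ck_on_compose_line[OF S(1) open_V line Ck_on_nS] .
  have "Ck_on k S \<xi>" for k
    unfolding \<xi>_def[abs_def]
    by (intro Ck_on_scaleR[OF S(1)] Ck_on_powr[OF S(1)] Ck_on_add[OF S(1)] Ck_on_mult[OF S(1)]
        Ck_on_const Ck_on_id Ck_Q Ck_nS \<eta>(1) Q_pos)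
  moreover have "\<xi> t \<in> N1 X nT (u0 + t *\<^sub>R a)" if "t \<in> S" for t
    unfolding \<xi>_def Q_def using N1_normalise_mem[OF base[OF that]] \<eta>(3)[OF that] by blast
  moreover have "\<xi> 0 = \<xi>0" using nS_u0 by (simp add: \<xi>_def)
  moreover have "(\<xi> has_derivative (\<lambda>h. h *\<^sub>R (DnS a + f))) (at 0)"
  proof -
    have "((\<lambda>t. nS (u0 + t *\<^sub>R a)) has_derivative (\<lambda>h. h *\<^sub>R DnS a)) (at 0)"
      by (rule has_derivative_along_line[OF nS_has_derivative])
    from has_derivative_normalised_curve[OF this Ck_on_Suc_has_derivative[OF S(1) \<eta>(1) S(2)]
        Ck_on_Suc_has_derivative[OF S(1) Ck_Q S(2)]]
    show ?thesis using \<eta>(2) by (simp add: \<xi>_def[abs_def])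
  qed
  ultimately show thesis using that by blast
qed

lemma dltilde_in_differential_image:
  assumes f: "f \<in> nor_space X u0" "lor f (nT u0) = 0" "lor f \<xi>0 = 0"
  shows "dltilde nu0 (DnT a + DnS a + f) \<in> differential_image (N1_bundle U X nT) (LGt U X nT) (X u0, \<xi>0)"
proof -
  obtain e where e: "e > 0" and line: "\<And>t. t \<in> {-e<..<e} \<Longrightarrow> u0 + t *\<^sub>R a \<in> V"
    using open_contains_line_segment[OF open_V u0] by blast
  define S where "S = {-e<..<e}"
  have S: "open S" "0 \<in> S" using e by (auto simp: S_def)
  note line = line[folded S_def]
  obtain \<xi> where \<xi>: "\<And>k. Ck_on k S \<xi>" "\<And>t. t \<in> S \<Longrightarrow> \<xi> t \<in> N1 X nT (u0 + t *\<^sub>R a)" "\<xi> 0 = \<xi>0"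
    "(\<xi> has_derivative (\<lambda>h. h *\<^sub>R (DnS a + f))) (at 0)"
    using N1_curve_along_line[OF f S line] by blast
  define \<gamma> where "\<gamma> t = (X (u0 + t *\<^sub>R a), \<xi> t)" for t
  have "curve_through (N1_bundle U X nT) (X u0, \<xi>0) \<gamma>"
    unfolding curve_through_def
  proof (intro conjI exI[of _ e])
    have X_line: "Ck_on k S (\<lambda>t. X (u0 + t *\<^sub>R a))" for k
      using Ck_on_compose_line[OF S(1) open_U _ Ck_on_X] line V_subset by blast
    show "smooth_on {-e<..<e} \<gamma>"
      unfolding smooth_on_def \<gamma>_def[abs_def] S_def[symmetric]
      by (intro allI Ck_on_Pair[OF S(1)] X_line \<xi>(1))
    show "\<gamma> ` {-e<..<e} \<subseteq> N1_bundle U X nT"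
      using \<xi>(2) line V_subset unfolding N1_bundle_def \<gamma>_def S_def[symmetric] by blast
  qed (use e \<xi>(3) in \<open>auto simp: \<gamma>_def\<close>)
  moreover have "((LGt U X nT \<circ> \<gamma>) has_derivative (\<lambda>h. h *\<^sub>R dltilde nu0 (DnT a + DnS a + f))) (at 0)"
  proof (rule has_derivative_transform_within_open[OF _ S])
    have "((\<lambda>t. nT (u0 + t *\<^sub>R a)) has_derivative (\<lambda>h. h *\<^sub>R DnT a)) (at 0)"
      by (rule has_derivative_along_line[OF nT_has_derivative_u0])
    from has_derivative_add[OF this \<xi>(4)]
    have "((\<lambda>t. nT (u0 + t *\<^sub>R a) + \<xi> t) has_derivative (\<lambda>h. h *\<^sub>R (DnT a + DnS a + f))) (at 0)"
      by (simp add: scaleR_add_right add.assoc)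
    from has_derivative_ltilde[OF this]
    show "((\<lambda>t. ltilde (nT (u0 + t *\<^sub>R a) + \<xi> t)) has_derivative
        (\<lambda>h. h *\<^sub>R dltilde nu0 (DnT a + DnS a + f))) (at 0)"
      using \<xi>(3) nu0(4) by (simp add: nu0_def c0_def)
    show "ltilde (nT (u0 + t *\<^sub>R a) + \<xi> t) = (LGt U X nT \<circ> \<gamma>) t" if "t \<in> S" for t
      using line[OF that] V_subset by (auto simp: \<gamma>_def LGt_eq)
  qed
  hence "dltilde nu0 (DnT a + DnS a + f) = vector_derivative (LGt U X nT \<circ> \<gamma>) (at 0)"
    using vector_derivative_at[symmetric] unfolding has_vector_derivative_def by blast
  ultimately show ?thesis unfolding differential_image_def by blast
qed

lemma det_shape0_nonzero_if_onto:
  assumes "\<And>w. fst w = 0 \<Longrightarrow> lor nu0 w = 0 \<Longrightarrow>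
    w \<in> differential_image (N1_bundle U X nT) (LGt U X nT) (X u0, \<xi>0)"
  shows "det shape0 \<noteq> 0"
proof
  assume "det shape0 = 0"
  hence "\<not> surj ((*v) shape0)"
    using matrix_right_invertible_surjective invertible_det_nz invertible_right_inverse by blast
  then obtain z where z: "\<And>a. shape0 *v a \<noteq> z" unfolding surj_def by (auto simp: eq_commute)
  define w where "w = DX u0 z - (fst (DX u0 z) / c0) *\<^sub>R nu0"
  have "fst w = 0" "lor nu0 w = 0"
    using nu0 lor_DX_nor[OF nu0(3)] by (auto simp: w_def c0_def lor_simps)
  then obtain a where "w + (1/c0) *\<^sub>R DX u0 (shape0 *v a) \<in> nor_space X u0"
    using differential_image_LGt_u0_normal assms by blast
  hence "(w + (1/c0) *\<^sub>R DX u0 (shape0 *v a)) + (fst (DX u0 z) / c0) *\<^sub>R nu0 \<in> nor_space X u0"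
    by (rule nor_space_add[OF _ nor_space_scaleR[OF nu0(3)]])
  moreover have "(w + (1/c0) *\<^sub>R DX u0 (shape0 *v a)) + (fst (DX u0 z) / c0) *\<^sub>R nu0
      = DX u0 (z + (1/c0) *\<^sub>R (shape0 *v a))"
    by (simp add: w_def linear_add[OF linear_DX[OF u0_in_U]] linear_scale[OF linear_DX[OF u0_in_U]])
  ultimately have "DX u0 (z + (1/c0) *\<^sub>R (shape0 *v a)) \<in> nor_space X u0" by simp
  hence "z + (1/c0) *\<^sub>R (shape0 *v a) = 0" by (rule tan_nor_eq_0[OF u0_in_U])
  hence "z = - ((1/c0) *\<^sub>R (shape0 *v a))" by (simp add: eq_neg_iff_add_eq_0)
  also have "\<dots> = shape0 *v ((- 1 / c0) *\<^sub>R a)"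
    by (simp add: matrix_vector_mult_scaleR linear_neg[OF matrix_vector_mul_linear])
  finally show False using z by blast
qed

lemma in_differential_image_if_det_shape0_nonzero:
  assumes "det shape0 \<noteq> 0" "fst w = 0" "lor nu0 w = 0"
  shows "w \<in> differential_image (N1_bundle U X nT) (LGt U X nT) (X u0, \<xi>0)"
proof -
  define z where "z = cramer_sol (gram u0) (\<chi> i. lor (Xu u0 i) w)"
  have wz: "w - DX u0 z \<in> nor_space X u0" unfolding z_def by (rule tangential_part[OF u0_in_U])
  define a where "a = cramer_sol shape0 ((- c0) *\<^sub>R z)"
  have "shape0 *v a = (- c0) *\<^sub>R z" unfolding a_def by (rule cramer_sol[OF assms(1)])
  hence Az: "DX u0 (shape0 *v a) = - c0 *\<^sub>R DX u0 z"
    using linear_scale[OF linear_DX[OF u0_in_U]] linear_neg[OF linear_DX[OF u0_in_U]] by simp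
  define \<kappa> where "\<kappa> = lor (c0 *\<^sub>R w - (DnT a + DnS a)) (nT u0)"
  define f where "f = c0 *\<^sub>R w + \<kappa> *\<^sub>R nu0 - (DnT a + DnS a)"
  have "f = c0 *\<^sub>R (w - DX u0 z) + \<kappa> *\<^sub>R nu0 - (DnT a + DnS a + DX u0 (shape0 *v a))"
    by (simp add: f_def Az algebra_simps)
  hence "f \<in> nor_space X u0"
    by (simp add: nor_space_diff nor_space_add nor_space_scaleR wz nu0(3) shape0_normal)
  moreover have fT: "lor f (nT u0) = 0" using nu0(2) by (simp add: f_def \<kappa>_def lor_simps)
  moreover have "lor f \<xi>0 = 0"
  proof -
    have "lor f nu0 = 0"
      using assms(3) nu0(1) lor_nu0_Dnu[of a]
      by (simp add: f_def lor_simps lor_sym[of w nu0] lor_sym[of "DnT a" nu0] lor_sym[of "DnS a" nu0])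
    thus ?thesis using fT by (simp add: nu0_def lor_add_right)
  qed
  ultimately have "dltilde nu0 (DnT a + DnS a + f) \<in> differential_image (N1_bundle U X nT) (LGt U X nT) (X u0, \<xi>0)"
    by (rule dltilde_in_differential_image)
  moreover have "dltilde nu0 (DnT a + DnS a + f) = w"
    using assms(2) nu0(4) by (simp add: f_def dltilde_def c0_def algebra_simps power2_eq_square)
  ultimately show ?thesis by simp
qed

lemma regular_point_LGt_iff:
  "regular_point (N1_bundle U X nT) lightcone_sphere (LGt U X nT) (X u0, \<xi>0) \<longleftrightarrow> det shape0 \<noteq> 0"
  using differential_image_LGt_u0_tangent tangent_set_at_LGt_u0
    det_shape0_nonzero_if_onto in_differential_image_if_det_shape0_nonzero
  unfolding regular_point_def by blast

end

theorem proposition5p1: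
  fixes U :: "(real^'s) set" and X :: "real^'s \<Rightarrow> real \<times> (real^'n)"
    and nT :: "real^'s \<Rightarrow> real \<times> (real^'n)"
    and u0 :: "real^'s" and v0 :: "real \<times> (real^'n)"
  assumes "open U"
    and "spacelike_embedding U X"
    and "future_unit_timelike_normal U X nT"
    and "u0 \<in> U"
    and "v0 \<in> lightcone_sphere"
  shows "((\<forall>i. pderiv (\<lambda>u. lor (X u) v0) u0 i = 0) \<longleftrightarrow>
           (\<exists>\<xi>0\<in>N1 X nT u0. v0 = LGt U X nT (X u0, \<xi>0))) \<and>
         (\<forall>\<xi>0 V nS. \<xi>0 \<in> N1 X nT u0 \<and> v0 = LGt U X nT (X u0, \<xi>0) \<and>
           local_section U X nT V nS \<and> u0 \<in> V \<and> nS u0 = \<xi>0 \<longrightarrow>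
           (K_ell X nT nS u0 = 0 \<longleftrightarrow> det (hessian (\<lambda>u. lor (X u) v0) u0) = 0) \<and>
           (flat_umbilical X nT nS u0 \<longleftrightarrow> rank (hessian (\<lambda>u. lor (X u) v0) u0) = 0) \<and>
           (nondegenerate_critical_point (\<lambda>u. lor (X u) v0) u0 \<longleftrightarrow>
              regular_point (N1_bundle U X nT) lightcone_sphere (LGt U X nT) (X u0, \<xi>0)))"
proof -
  interpret spacelike_timelike_normal U X nT
    using assms(1-3) by unfold_locales
  have critical: "(\<forall>i. pderiv (\<lambda>u. lor (X u) v0) u0 i = 0) \<longleftrightarrow>
      (\<exists>\<xi>0\<in>N1 X nT u0. v0 = LGt U X nT (X u0, \<xi>0))"
    by (rule height_critical_iff_LGt[OF assms(4,5)])
  moreover have "(K_ell X nT nS u0 = 0 \<longleftrightarrow> det (hessian (\<lambda>u. lor (X u) v0) u0) = 0) \<and>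
      (flat_umbilical X nT nS u0 \<longleftrightarrow> rank (hessian (\<lambda>u. lor (X u) v0) u0) = 0) \<and>
      (nondegenerate_critical_point (\<lambda>u. lor (X u) v0) u0 \<longleftrightarrow>
        regular_point (N1_bundle U X nT) lightcone_sphere (LGt U X nT) (X u0, \<xi>0))"
    if sec: "\<xi>0 \<in> N1 X nT u0 \<and> v0 = LGt U X nT (X u0, \<xi>0) \<and>
      local_section U X nT V nS \<and> u0 \<in> V \<and> nS u0 = \<xi>0" for \<xi>0 V nS
  proof -
    interpret normal_section_at U X nT u0 \<xi>0 V nS
      using sec by unfold_locales auto
    have "\<forall>i. pderiv (\<lambda>u. lor (X u) v0) u0 i = 0"
      using critical sec by blast
    then show ?thesis
      using sec K_ell_u0 det_hessian_eq_0_iff flat_umbilical_iff_shape0 hessian_eq_0_iff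
        regular_point_LGt_iff
      by (simp add: nondegenerate_critical_point_def rank_eq_0)
  qed
  ultimately show ?thesis by blast
qed

end
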